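(* Let $V=(J,(V_j)_{j\in J},d,H)$ be a hypergraph system, let $(\nu_e)_{e\in H}$ be a pseudorandom system of measures on $V$, and let $e\in H$. Let $K$ be a finite set, $D\ge0$ an integer, and $P:\mathbb{R}^K\to\mathbb{R}$ a polynomial of degree at most $D$ in the $|K|$ variables, all of whose coefficients are bounded in magnitude by $M$. For each $k\in K$ let $f_k:V_e\to\mathbb{R}$ satisfy $|f_k(x)|\le\nu_e(x)+1$ for all $x\in V_e$. Then $$\Big|\mathbb{E}\Big((\nu_e(x_e)-1)\,P\big((\mathcal{D}_ef_k(x_e))_{k\in K}\big)\ \Big|\ x_e\in V_e\Big)\Big|=o_{N\to\infty;K,D,M}(1).$$
   Context: A hypergraph system is a quadruple $V=(J,(V_j)_{j\in J},d,H)$ where $J$ is a finite set, each $V_j$ is a finite nonempty set, $d\ge1$ is an integer and $H\subseteq\binom{J}{d}:=\{e\subseteq J:|e|=d\}$; for $e\subseteq J$ put $V_e:=\prod_{j\in e}V_j$. For a finite nonempty set $Z$ and $f:Z\to\mathbb{R}$, $\mathbb{E}(f(x)\mid x\in Z):=|Z|^{-1}\sum_{x\in Z}f(x)$; constraints written after the bar mean uniform averaging over all tuples satisfying them. All objects depend on a parameter $N$ ranging over a sequence tending to infinity while $J,d,H$ are fixed; implicit constants may depend on $J$. $o_{x\to0;y}(X)$ denotes a quantity bounded in magnitude by $c(x,y)X$ where $c(x,y)\to0$ as $x\to0$ for each fixed $y$ (here uniformly in the functions $f_k$ and $P$); $O_y(X)$ a quantity bounded by $C(y)X$. Cube notation: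 for a finite set $e$, $\{0,1\}^e$ is the set of tuples $\omega=(\omega_j)_{j\in e}$ with $\omega_j\in\{0,1\}$, and $0^e$ is the all-zero tuple; for $x^{(0)}_J,x^{(1)}_J\in V_J$, $e\subseteq J$ and $\omega\in\{0,1\}^e$, set $x^{(\omega)}_e:=(x^{(\omega_j)}_j)_{j\in e}\in V_e$ and $x^{(a)}_e:=(x^{(a)}_j)_{j\in e}$ for $a\in\{0,1\}$. A system of measures is a family of functions $\nu_e:V_e\to[0,\infty)$, $e\in H$, with $\mathbb{E}(\nu_e(x_e)\mid x_e\in V_e)=1+o_{N\to\infty}(1)$. For $e\in H$ and $f:V_e\to\mathbb{R}$, the dual function is $\mathcal{D}_ef(x^{(0)}_e):=\mathbb{E}\big(\prod_{\omega\in\{0,1\}^e,\ \omega\neq 0^e}f(x^{(\omega)}_e)\mid x^{(1)}_e\in V_e\big)$. The system is pseudorandom if: (i) $\mathcal{D}_e(\nu_e+1)(x_e)=O(1)$ for all $e\in H$, $x_e\in V_e$; (ii) for every choice of exponents $n_{e,\omega}\in\{0,1\}$, $\mathbb{E}\big(\prod_{e\in H}\prod_{\omega\in\{0,1\}^e}\nu_e(x^{(\omega)}_e)^{n_{e,\omega}}\mid x^{(0)}_J,x^{(1)}_J\in V_J\big)=1+o_{N\to\infty}(1)$; (iii) for every $e\in H$, $j\in e$, every choice of $n_{e,\omega}\in\{0,1\}$ and every integer $K\ge0$, $\mathbb{E}\Big(\mathbb{E}\big(\prod_{\omega\in\{0,1\}^e}\nu_e(x^{(\omega)}_e)^{n_{e,\omega}}\mid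 x^{(0)}_j,x^{(1)}_j\in V_j\big)^K\ \Big|\ x^{(0)}_{e\setminus\{j\}},x^{(1)}_{e\setminus\{j\}}\in V_{e\setminus\{j\}}\Big)=O_K(1)$. *)

theory Defs
  imports Complex_Main "HOL-Library.FuncSet"
begin

definition avg :: "'b set \<Rightarrow> ('b \<Rightarrow> real) \<Rightarrow> real" where
  "avg Z f = (\<Sum>x\<in>Z. f x) / real (card Z)"

abbreviation Vpts :: "('j \<Rightarrow> 'a set) \<Rightarrow> 'j set \<Rightarrow> ('j \<Rightarrow> 'a) set" where
  "Vpts V e \<equiv> PiE e V"

text \<open>The cube {0,1}^e (0 = False, 1 = True) and the zero tuple 0^e.\<close>
definition cube :: "'j set \<Rightarrow> ('j \<Rightarrow> bool) set" where
  "cube e = PiE e (\<lambda>_. UNIV)"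

definition zero_cube :: "'j set \<Rightarrow> ('j \<Rightarrow> bool)" where
  "zero_cube e = restrict (\<lambda>_. False) e"

definition mix :: "'j set \<Rightarrow> ('j \<Rightarrow> bool) \<Rightarrow> ('j \<Rightarrow> 'a) \<Rightarrow> ('j \<Rightarrow> 'a) \<Rightarrow> ('j \<Rightarrow> 'a)" where
  "mix e \<omega> x0 x1 = restrict (\<lambda>j. if \<omega> j then x1 j else x0 j) e"

definition dual :: "('j \<Rightarrow> 'a set) \<Rightarrow> 'j set \<Rightarrow> (('j \<Rightarrow> 'a) \<Rightarrow> real) \<Rightarrow> ('j \<Rightarrow> 'a) \<Rightarrow> real" where
  "dual V e f x0 = avg (Vpts V e)
     (\<lambda>x1. \<Prod>\<omega>\<in>cube e - {zero_cube e}. f (mix e \<omega> x0 x1))"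

text \<open>Hypergraph system (J, (V_j), d, H), with vertex sets V n j depending on the
  parameter N (here the sequence index n).\<close>
definition hypergraph_system ::
  "'j set \<Rightarrow> (nat \<Rightarrow> 'j \<Rightarrow> 'a set) \<Rightarrow> nat \<Rightarrow> 'j set set \<Rightarrow> bool" where
  "hypergraph_system J V d H \<longleftrightarrow> finite J \<and> d \<ge> 1 \<and>
     (\<forall>n. \<forall>j\<in>J. finite (V n j) \<and> V n j \<noteq> {}) \<and>
     H \<subseteq> {e. e \<subseteq> J \<and> card e = d}"

definition system_of_measures ::
  "(nat \<Rightarrow> 'j \<Rightarrow> 'a set) \<Rightarrow> 'j set set \<Rightarrow> (nat \<Rightarrow> 'j set \<Rightarrow> ('j \<Rightarrow> 'a) \<Rightarrow> real) \<Rightarrow> bool" where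
  "system_of_measures V H \<nu> \<longleftrightarrow>
     (\<forall>n. \<forall>e\<in>H. \<forall>x\<in>Vpts (V n) e. \<nu> n e x \<ge> 0) \<and>
     (\<forall>e\<in>H. (\<lambda>n. avg (Vpts (V n) e) (\<nu> n e)) \<longlonglongrightarrow> 1)"

text \<open>nu^{n_{e,\<omega>}} with exponent in {0,1} encoded as a boolean.\<close>
definition pw :: "bool \<Rightarrow> real \<Rightarrow> real" where
  "pw b t = (if b then t else 1)"

definition pseudorandom ::
  "'j set \<Rightarrow> (nat \<Rightarrow> 'j \<Rightarrow> 'a set) \<Rightarrow> 'j set set \<Rightarrow> (nat \<Rightarrow> 'j set \<Rightarrow> ('j \<Rightarrow> 'a) \<Rightarrow> real) \<Rightarrow> bool" where
  "pseudorandom J V H \<nu> \<longleftrightarrow>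
     system_of_measures V H \<nu> \<and>
     \<comment> \<open>(i)\<close>
     (\<exists>C. \<forall>\<^sub>F n in sequentially. \<forall>e\<in>H. \<forall>x\<in>Vpts (V n) e.
         \<bar>dual (V n) e (\<lambda>y. \<nu> n e y + 1) x\<bar> \<le> C) \<and>
     \<comment> \<open>(ii)\<close>
     (\<forall>ex :: 'j set \<Rightarrow> ('j \<Rightarrow> bool) \<Rightarrow> bool.
        (\<lambda>n. avg (Vpts (V n) J \<times> Vpts (V n) J)
           (\<lambda>(x0, x1). \<Prod>e\<in>H. \<Prod>\<omega>\<in>cube e. pw (ex e \<omega>) (\<nu> n e (mix e \<omega> x0 x1))))
        \<longlonglongrightarrow> 1) \<and>
     \<comment> \<open>(iii)\<close>
     (\<forall>e\<in>H. \<forall>j\<in>e. \<forall>ex :: ('j \<Rightarrow> bool) \<Rightarrow> bool. \<forall>K :: nat.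
        \<exists>C. \<forall>\<^sub>F n in sequentially.
          \<bar>avg (Vpts (V n) (e - {j}) \<times> Vpts (V n) (e - {j}))
             (\<lambda>(x0, x1). (avg (V n j \<times> V n j)
                (\<lambda>(y0, y1). \<Prod>\<omega>\<in>cube e.
                   pw (ex \<omega>) (\<nu> n e (mix e \<omega> (x0(j := y0)) (x1(j := y1)))))) ^ K)\<bar> \<le> C)"

definition monomials_le :: "'k set \<Rightarrow> nat \<Rightarrow> ('k \<Rightarrow> nat) set" where
  "monomials_le K D = {\<alpha>. \<alpha> \<in> extensional K \<and> sum \<alpha> K \<le> D}"

definition bounded_poly :: "'k set \<Rightarrow> nat \<Rightarrow> real \<Rightarrow> (('k \<Rightarrow> real) \<Rightarrow> real) \<Rightarrow> bool" where
  "bounded_poly K D M P \<longleftrightarrow>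
     (\<exists>c :: ('k \<Rightarrow> nat) \<Rightarrow> real.
        (\<forall>\<alpha>\<in>monomials_le K D. \<bar>c \<alpha>\<bar> \<le> M) \<and>
        (\<forall>y. P y = (\<Sum>\<alpha>\<in>monomials_le K D. c \<alpha> * (\<Prod>k\<in>K. y k ^ \<alpha> k))))"

end

theory Submission
  imports Defs "HOL-Analysis.Convex"
begin

text \<open>Expanding \<open>P\<close> into monomials reduces the claim to correlations
  \<open>E[(\<nu> - 1) \<Prod>\<^sub>i\<^sub>\<in>\<^sub>I D f\<^sub>i]\<close> with finitely many dual functions. Such a correlation is linked to
  the cube average \<open>E[\<Prod>\<^sub>\<omega> (\<nu>(x^(\<omega>)) - 1)]\<close>, which tends to \<open>0\<close> by condition (ii), through
  interpolating forms indexed by \<open>R \<subseteq> e\<close>: moving one coordinate \<open>j\<close> out of \<open>R\<close> costs one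
  Cauchy-Schwarz inequality, whose other factor is a moment of the \<open>\<nu>\<close>-weight on the link of \<open>j\<close>
  and is bounded by condition (iii). After \<open>|e|\<close> steps,
  \<open>|correlation|^(2^|e|) \<le> \<Gamma>^(2^|e| - 1) * |cube average|\<close>.\<close>

lemma avg_cong: "(\<And>x. x \<in> A \<Longrightarrow> f x = g x) \<Longrightarrow> avg A f = avg A g"
  unfolding avg_def by (simp cong: sum.cong)

lemma avg_const: "finite A \<Longrightarrow> A \<noteq> {} \<Longrightarrow> avg A (\<lambda>_. c) = c"
  unfolding avg_def by simp

lemma avg_add: "avg A (\<lambda>x. f x + g x) = avg A f + avg A g"
  unfolding avg_def by (simp add: sum.distrib add_divide_distrib)

lemma avg_mult_left: "avg A (\<lambda>x. c * f x) = c * avg A f"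
  unfolding avg_def by (simp add: sum_distrib_left)

lemma avg_mult_right: "avg A (\<lambda>x. f x * c) = avg A f * c"
  unfolding avg_def by (simp add: sum_distrib_right)

lemma avg_sum: "avg A (\<lambda>x. \<Sum>s\<in>S. g s x) = (\<Sum>s\<in>S. avg A (g s))"
  unfolding avg_def by (simp add: sum.swap[of _ S] sum_divide_distrib)

lemma avg_mono: "(\<And>x. x \<in> A \<Longrightarrow> f x \<le> g x) \<Longrightarrow> avg A f \<le> avg A g"
  unfolding avg_def by (simp add: sum_mono divide_right_mono)

lemma avg_nonneg: "(\<And>x. x \<in> A \<Longrightarrow> 0 \<le> f x) \<Longrightarrow> 0 \<le> avg A f"
  unfolding avg_def by (simp add: sum_nonneg)

lemma abs_avg_le: "\<bar>avg A f\<bar> \<le> avg A (\<lambda>x. \<bar>f x\<bar>)"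
  unfolding avg_def by (simp add: abs_divide divide_right_mono sum_abs)

lemma card_mult_avg: "finite A \<Longrightarrow> A \<noteq> {} \<Longrightarrow> real (card A) * avg A g = sum g A"
  unfolding avg_def by simp

lemma avg_Times: "avg (A \<times> B) (\<lambda>(x, y). g x y) = avg A (\<lambda>x. avg B (\<lambda>y. g x y))"
proof -
  have "avg (A \<times> B) (\<lambda>(x, y). g x y) =
      (\<Sum>x\<in>A. \<Sum>y\<in>B. g x y) / (real (card A) * real (card B))"
    unfolding avg_def by (simp add: sum.cartesian_product card_cartesian_product)
  also have "\<dots> = avg A (\<lambda>x. avg B (\<lambda>y. g x y))"
    unfolding avg_def by (simp add: sum_divide_distrib mult.commute)
  finally show ?thesis .
qed

lemma avg_Cauchy_Schwarz:
  "(avg A (\<lambda>x. f x * g x))\<^sup>2 \<le> avg A (\<lambda>x. (f x)\<^sup>2) * avg A (\<lambda>x. (g x)\<^sup>2)"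
proof -
  have "(\<Sum>x\<in>A. f x * g x)\<^sup>2 / (real (card A))\<^sup>2 \<le>
      (\<Sum>x\<in>A. (f x)\<^sup>2) * (\<Sum>x\<in>A. (g x)\<^sup>2) / (real (card A))\<^sup>2"
    by (simp add: divide_right_mono Cauchy_Schwarz_ineq_sum)
  then show ?thesis unfolding avg_def by (simp add: power_divide power2_eq_square)
qed

lemma sum_PiE_insert:
  assumes "c \<notin> S"
  shows "(\<Sum>x\<in>PiE (insert c S) W. g x) = (\<Sum>y\<in>W c. \<Sum>h\<in>PiE S W. g (h(c := y)))"
proof -
  have "(\<Sum>x\<in>PiE (insert c S) W. g x) = (\<Sum>p\<in>W c \<times> PiE S W. g ((\<lambda>(y, h). h(c := y)) p))"
    unfolding PiE_insert_eq by (rule sum.reindex[OF inj_combinator[OF assms], unfolded comp_def])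
  then show ?thesis by (simp add: sum.cartesian_product split_def)
qed

lemma avg_PiE_resample:
  assumes "finite I" "c \<in> I" "\<And>k. k \<in> I \<Longrightarrow> finite (W k) \<and> W k \<noteq> {}"
  shows "avg (PiE I W) g = avg (PiE I W) (\<lambda>x. avg (W c) (\<lambda>s. g (x(c := s))))"
proof -
  define S where "S = I - {c}"
  have I: "I = insert c S" "c \<notin> S" using assms unfolding S_def by auto
  have Wc: "finite (W c)" "W c \<noteq> {}" using assms by auto
  have "(\<Sum>x\<in>PiE I W. avg (W c) (\<lambda>s. g (x(c := s)))) =
      real (card (W c)) * (\<Sum>h\<in>PiE S W. avg (W c) (\<lambda>s. g (h(c := s))))"
    unfolding I(1) by (simp add: sum_PiE_insert[OF I(2)])
  also have "\<dots> = (\<Sum>h\<in>PiE S W. \<Sum>s\<in>W c. g (h(c := s)))"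
    using Wc by (simp add: sum_distrib_left card_mult_avg)
  also have "\<dots> = (\<Sum>x\<in>PiE I W. g x)"
    unfolding I(1) by (subst sum_PiE_insert[OF I(2)]) (rule sum.swap)
  finally show ?thesis unfolding avg_def by simp
qed

lemma avg_PiE_restrict:
  assumes "finite I" "S \<subseteq> I" "\<And>k. k \<in> I \<Longrightarrow> finite (W k) \<and> W k \<noteq> {}"
  shows "avg (PiE I W) (\<lambda>x. g (restrict x S)) = avg (PiE S W) g"
proof -
  have grow: "avg (PiE (S \<union> T) W) (\<lambda>x. g (restrict x S)) = avg (PiE S W) g"
    if "finite T" "T \<subseteq> I - S" for T
    using that
  proof (induction T rule: finite_induct)
    case empty
    show ?case by (simp only: Un_empty_right) (rule avg_cong, simp add: PiE_restrict)
  next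
    case (insert c T)
    have c: "c \<notin> S \<union> T" and Wc: "finite (W c)" "W c \<noteq> {}"
      using insert assms(3) by auto
    have ST: "S \<union> insert c T = insert c (S \<union> T)" by auto
    have restr: "\<And>h y. restrict (h(c := y)) S = restrict h S"
      using insert by (auto simp: restrict_def fun_eq_iff)
    have "finite (S \<union> T)" using insert assms(1,2) finite_subset by auto
    then have card: "card (PiE (insert c (S \<union> T)) W) = card (W c) * card (PiE (S \<union> T) W)"
      using c by (simp add: card_PiE)
    have "avg (PiE (S \<union> insert c T) W) (\<lambda>x. g (restrict x S)) =
        avg (PiE (S \<union> T) W) (\<lambda>x. g (restrict x S))"
      using Wc c restr card unfolding avg_def ST by (simp add: sum_PiE_insert)
    also have "\<dots> = avg (PiE S W) g" using insert.prems by (intro insert.IH) simp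
    finally show ?case .
  qed
  have "S \<union> (I - S) = I" using assms(2) by auto
  then show ?thesis using grow[of "I - S"] assms(1) by simp
qed

lemma avg_PiE_Times_restrict:
  assumes "finite I" "S \<subseteq> I" "\<And>k. k \<in> I \<Longrightarrow> finite (W k) \<and> W k \<noteq> {}"
  shows "avg (PiE I W \<times> PiE I W) (\<lambda>(x, y). g (restrict x S) (restrict y S)) =
    avg (PiE S W \<times> PiE S W) (\<lambda>(x, y). g x y)"
proof -
  have "avg (PiE I W) (\<lambda>x. avg (PiE I W) (\<lambda>y. g (restrict x S) (restrict y S))) =
      avg (PiE I W) (\<lambda>x. (\<lambda>x'. avg (PiE S W) (g x')) (restrict x S))"
    using avg_PiE_restrict[of I S W, OF assms] by simp
  then show ?thesis
    by (simp add: avg_Times avg_PiE_restrict[of I S W "\<lambda>x. avg (PiE S W) (g x)", OF assms])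
qed

lemma prod_le_one_plus_sum_power:
  fixes x :: "'i \<Rightarrow> real"
  assumes "finite I" "\<And>i. i \<in> I \<Longrightarrow> 0 \<le> x i"
  shows "(\<Prod>i\<in>I. x i) \<le> 1 + (\<Sum>i\<in>I. x i ^ card I)"
proof (cases "I = {}")
  case False
  have "Max (x ` I) \<in> x ` I" using assms(1) False by simp
  then obtain i0 where i0: "i0 \<in> I" "x i0 = Max (x ` I)" by auto
  have "(\<Prod>i\<in>I. x i) \<le> (\<Prod>i\<in>I. x i0)"
    using assms i0 by (intro prod_mono) auto
  also have "\<dots> = x i0 ^ card I" by simp
  also have "\<dots> \<le> (\<Sum>i\<in>I. x i ^ card I)"
    using i0(1) assms by (intro member_le_sum) auto
  finally show ?thesis by simp
qed simp

lemma power_sum_le_card_power_mult_sum_power: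
  fixes g :: "'b \<Rightarrow> real"
  assumes "finite A" "A \<noteq> {}" "\<And>a. a \<in> A \<Longrightarrow> 0 \<le> g a"
  shows "(\<Sum>a\<in>A. g a) ^ p \<le> real (card A) ^ p * (\<Sum>a\<in>A. g a ^ p)"
proof -
  have "Max (g ` A) \<in> g ` A" using assms(1,2) by simp
  then obtain a0 where a0: "a0 \<in> A" "g a0 = Max (g ` A)" by auto
  have "(\<Sum>a\<in>A. g a) \<le> real (card A) * g a0"
    using sum_bounded_above[of A g "g a0"] assms(1) a0 by simp
  then have "(\<Sum>a\<in>A. g a) ^ p \<le> real (card A) ^ p * g a0 ^ p"
    using assms by (simp add: sum_nonneg power_mono flip: power_mult_distrib)
  also have "\<dots> \<le> real (card A) ^ p * (\<Sum>a\<in>A. g a ^ p)"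
    using a0(1) assms by (intro mult_left_mono member_le_sum) auto
  finally show ?thesis .
qed

lemma prod_diff_one_eq_sum_Pow:
  fixes a :: "'b \<Rightarrow> real"
  assumes "finite C"
  shows "(\<Prod>c\<in>C. a c - 1) = (\<Sum>S\<in>Pow C. (-1) ^ card (C - S) * (\<Prod>c\<in>S. a c))"
proof -
  have "(\<Prod>c\<in>C. a c + (-1)) = (\<Sum>S\<in>Pow C. (\<Prod>c\<in>S. a c) * (\<Prod>c\<in>C - S. -1))"
    by (rule prod_add[OF assms])
  then show ?thesis by (simp add: mult.commute)
qed

lemma sum_PiE_image_prod:
  fixes G :: "'i \<Rightarrow> 'x \<Rightarrow> 'r::comm_semiring_1"
  assumes "inj_on \<phi> I" "finite I" "finite X"
  shows "(\<Sum>h\<in>PiE (\<phi> ` I) (\<lambda>_. X). \<Prod>i\<in>I. G i (h (\<phi> i))) = (\<Prod>i\<in>I. \<Sum>y\<in>X. G i y)"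
proof -
  let ?G = "\<lambda>l. G (the_inv_into I \<phi> l)"
  have "\<And>h. (\<Prod>i\<in>I. G i (h (\<phi> i))) = (\<Prod>l\<in>\<phi> ` I. ?G l (h l))"
    using assms(1) by (simp add: prod.reindex the_inv_into_f_f)
  moreover have "(\<Prod>l\<in>\<phi> ` I. \<Sum>y\<in>X. ?G l y) = (\<Prod>i\<in>I. \<Sum>y\<in>X. G i y)"
    using assms(1) by (simp add: prod.reindex the_inv_into_f_f)
  ultimately show ?thesis
    using prod_sum_PiE[of "\<phi> ` I" "\<lambda>_. X" ?G] assms(2,3) by simp
qed

lemma avg_PiE_insert_image:
  assumes "inj_on \<phi> I" "b \<notin> \<phi> ` I" "finite I" "finite X" "X \<noteq> {}"
  shows "avg (PiE (insert b (\<phi> ` I)) (\<lambda>_. X)) (\<lambda>\<zeta>. F (\<zeta> b) * (\<Prod>i\<in>I. G i (\<zeta> b) (\<zeta> (\<phi> i)))) =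
    avg X (\<lambda>x. F x * (\<Prod>i\<in>I. avg X (G i x)))"
proof -
  let ?N = "real (card X)"
  have b: "\<And>i. i \<in> I \<Longrightarrow> \<phi> i \<noteq> b" using assms(2) by auto
  have inner: "(\<Sum>h\<in>PiE (\<phi> ` I) (\<lambda>_. X). \<Prod>i\<in>I. G i x (h (\<phi> i))) = (\<Prod>i\<in>I. \<Sum>y\<in>X. G i x y)" for x
    using assms by (intro sum_PiE_image_prod)
  have "(\<Sum>\<zeta>\<in>PiE (insert b (\<phi> ` I)) (\<lambda>_. X). F (\<zeta> b) * (\<Prod>i\<in>I. G i (\<zeta> b) (\<zeta> (\<phi> i)))) =
      (\<Sum>x\<in>X. F x * (\<Prod>i\<in>I. \<Sum>y\<in>X. G i x y))"
    using assms(2) b by (simp add: sum_PiE_insert inner cong: prod.cong flip: sum_distrib_left)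
  also have "\<dots> = ?N ^ card I * (\<Sum>x\<in>X. F x * (\<Prod>i\<in>I. avg X (G i x)))"
  proof -
    have "(\<Prod>i\<in>I. \<Sum>y\<in>X. G i x y) = ?N ^ card I * (\<Prod>i\<in>I. avg X (G i x))" for x
      using assms(4,5) by (simp add: card_mult_avg[symmetric] prod.distrib)
    then show ?thesis by (simp add: sum_distrib_left mult.left_commute)
  qed
  moreover have "card (PiE (insert b (\<phi> ` I)) (\<lambda>_. X)) = card X * card X ^ card I"
    using assms(1-3) by (simp add: card_PiE card_image)
  moreover have "?N > 0" using assms(4,5) by (simp add: card_gt_0_iff)
  ultimately show ?thesis unfolding avg_def by simp
qed

lemma finite_cube: "finite e \<Longrightarrow> finite (cube e)"
  unfolding cube_def by (simp add: finite_PiE)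

lemma mix_restrict: "mix e \<theta> x0 x1 = mix e \<theta> (restrict x0 e) (restrict x1 e)"
  unfolding mix_def by (auto simp: fun_eq_iff restrict_def)

lemma cube_split_coordinate:
  assumes "j \<in> e" "finite e" "\<And>\<theta> c. P (\<theta>(j := c)) = P \<theta>"
  shows "prod g {\<theta>\<in>cube e. P \<theta>} =
    prod g {\<theta>\<in>cube e. P \<theta> \<and> \<not> \<theta> j} * prod (\<lambda>\<theta>. g (\<theta>(j := True))) {\<theta>\<in>cube e. P \<theta> \<and> \<not> \<theta> j}"
proof -
  define A where "A = {\<theta>\<in>cube e. P \<theta> \<and> \<not> \<theta> j}"
  define B where "B = {\<theta>\<in>cube e. P \<theta> \<and> \<theta> j}"
  have cube_upd: "\<And>\<theta> c. \<theta> \<in> cube e \<Longrightarrow> \<theta>(j := c) \<in> cube e"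
    unfolding cube_def using assms(1) by (auto simp: PiE_iff extensional_def)
  have "B \<subseteq> (\<lambda>\<theta>. \<theta>(j := True)) ` A"
  proof
    fix \<theta> assume "\<theta> \<in> B"
    then have "\<theta>(j := False) \<in> A" "\<theta> = (\<theta>(j := False))(j := True)"
      unfolding A_def B_def using assms(3)[of \<theta> False] cube_upd by (auto simp: fun_eq_iff)
    then show "\<theta> \<in> (\<lambda>\<theta>. \<theta>(j := True)) ` A" by blast
  qed
  then have B: "B = (\<lambda>\<theta>. \<theta>(j := True)) ` A"
    unfolding A_def B_def using assms(3) cube_upd by auto
  have "inj_on (\<lambda>\<theta>. \<theta>(j := True)) A"
    unfolding A_def inj_on_def by (auto simp: fun_eq_iff)
  then have "prod g B = prod (\<lambda>\<theta>. g (\<theta>(j := True))) A"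
    unfolding B by (simp add: prod.reindex)
  moreover have "prod g {\<theta>\<in>cube e. P \<theta>} = prod g A * prod g B"
    unfolding A_def B_def using finite_cube[OF assms(2)]
    by (subst prod.union_disjoint[symmetric]) (auto intro: prod.cong)
  ultimately show ?thesis unfolding A_def by simp
qed

section \<open>Interpolating forms\<close>

text \<open>A configuration assigns a point of \<open>V\<^sub>e\<close> to every slot: \<open>Cube0\<close>, \<open>Cube1\<close> carry the pair
  \<open>x^(0), x^(1)\<close> of a cube, \<open>Base\<close> the point at which \<open>\<nu> - 1\<close> and the dual functions are
  evaluated, and \<open>Dual i\<close> the point \<open>x^(1)\<close> averaged over in the dual function of \<open>f i\<close>.\<close>

datatype 'i slot = Cube0 | Cube1 | Base | Dual 'i

locale dual_product_setting =
  fixes e :: "'j set" and W :: "'j \<Rightarrow> 'a set" and nu :: "('j \<Rightarrow> 'a) \<Rightarrow> real"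
    and I :: "'i set"
  assumes finite_e: "finite e"
    and finite_W: "\<And>k. k \<in> e \<Longrightarrow> finite (W k)"
    and W_ne: "\<And>k. k \<in> e \<Longrightarrow> W k \<noteq> {}"
    and finite_I: "finite I"
    and nu_nonneg: "\<And>x. x \<in> Vpts W e \<Longrightarrow> 0 \<le> nu x"
begin

definition slots :: "'i slot set" where
  "slots = insert Cube0 (insert Cube1 (insert Base (Dual ` I)))"

definition configs :: "('i slot \<Rightarrow> 'j \<Rightarrow> 'a) set" where
  "configs = PiE slots (\<lambda>_. Vpts W e)"

definition vertex :: "('i slot \<Rightarrow> 'j \<Rightarrow> 'a) \<Rightarrow> ('j \<Rightarrow> 'i slot) \<Rightarrow> 'j \<Rightarrow> 'a" where
  "vertex \<xi> \<sigma> = restrict (\<lambda>k. \<xi> (\<sigma> k) k) e"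

definition upd_slot :: "('i slot \<Rightarrow> 'j \<Rightarrow> 'a) \<Rightarrow> 'i slot \<Rightarrow> 'j \<Rightarrow> 'a \<Rightarrow> 'i slot \<Rightarrow> 'j \<Rightarrow> 'a" where
  "upd_slot \<xi> l k s = \<xi>(l := (\<xi> l)(k := s))"

definition slot_of :: "'j set \<Rightarrow> 'i \<Rightarrow> ('j \<Rightarrow> bool) \<Rightarrow> 'j \<Rightarrow> 'i slot" where
  "slot_of R i \<theta> k =
     (if k \<in> R then (if \<theta> k then Dual i else Base) else (if \<theta> k then Cube1 else Cube0))"

definition lower_face :: "'j set \<Rightarrow> ('j \<Rightarrow> bool) set" where
  "lower_face R = {\<theta> \<in> cube e. \<forall>k\<in>R. \<not> \<theta> k}"

text \<open>The interpolating forms: coordinates in \<open>R\<close> are read from \<open>Base\<close> and \<open>Dual i\<close>, the others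
  from the cube pair. So \<open>interpolant f e\<close> is the dual correlation and \<open>interpolant f {}\<close> the cube
  average of \<open>\<nu> - 1\<close>. On \<open>lower_face R\<close> the slot does not depend on \<open>i\<close>, whence \<open>undefined\<close>.\<close>

definition integrand :: "('i \<Rightarrow> ('j \<Rightarrow> 'a) \<Rightarrow> real) \<Rightarrow> 'j set \<Rightarrow> ('i slot \<Rightarrow> 'j \<Rightarrow> 'a) \<Rightarrow> real" where
  "integrand f R \<xi> =
     (\<Prod>\<theta>\<in>lower_face R. nu (vertex \<xi> (slot_of R undefined \<theta>)) - 1) *
     (\<Prod>i\<in>I. \<Prod>\<theta>\<in>cube e - lower_face R. f i (vertex \<xi> (slot_of R i \<theta>)))"

definition interpolant :: "('i \<Rightarrow> ('j \<Rightarrow> 'a) \<Rightarrow> real) \<Rightarrow> 'j set \<Rightarrow> real" where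
  "interpolant f R = avg configs (integrand f R)"

lemma finite_points: "finite (Vpts W e)"
  using finite_e finite_W by (simp add: finite_PiE)

lemma points_ne: "Vpts W e \<noteq> {}"
  using W_ne by (simp add: PiE_eq_empty_iff)

lemma finite_slots: "finite slots"
  unfolding slots_def using finite_I by simp

lemma in_slots [simp]: "Cube0 \<in> slots" "Cube1 \<in> slots" "Base \<in> slots" "i \<in> I \<Longrightarrow> Dual i \<in> slots"
  unfolding slots_def by auto

lemma finite_configs: "finite configs"
  unfolding configs_def using finite_slots finite_points by (simp add: finite_PiE)

lemma configs_ne: "configs \<noteq> {}"
  unfolding configs_def using points_ne by (simp add: PiE_eq_empty_iff)

lemma config_in_points: "\<xi> \<in> configs \<Longrightarrow> l \<in> slots \<Longrightarrow> \<xi> l \<in> Vpts W e"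
  unfolding configs_def by auto

lemma vertex_in_points: "\<xi> \<in> configs \<Longrightarrow> (\<And>k. k \<in> e \<Longrightarrow> \<sigma> k \<in> slots) \<Longrightarrow> vertex \<xi> \<sigma> \<in> Vpts W e"
  unfolding vertex_def configs_def by (auto simp: PiE_iff)

lemma slot_of_in_slots: "i \<in> I \<Longrightarrow> slot_of R i \<theta> k \<in> slots"
  unfolding slot_of_def by simp

lemma upd_slot_in_configs:
  "\<xi> \<in> configs \<Longrightarrow> l \<in> slots \<Longrightarrow> k \<in> e \<Longrightarrow> s \<in> W k \<Longrightarrow> upd_slot \<xi> l k s \<in> configs"
  unfolding upd_slot_def configs_def by (auto simp: PiE_iff extensional_def)

lemma vertex_upd_slot_other: "\<sigma> k \<noteq> l \<Longrightarrow> vertex (upd_slot \<xi> l k s) \<sigma> = vertex \<xi> \<sigma>"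
  unfolding vertex_def upd_slot_def by (auto simp: fun_eq_iff restrict_def)

lemma upd_slot_commute: "l \<noteq> l' \<Longrightarrow> upd_slot (upd_slot \<xi> l k s) l' k' t = upd_slot (upd_slot \<xi> l' k' t) l k s"
  unfolding upd_slot_def by (auto simp: fun_eq_iff)

lemma upd_slot_same: "upd_slot \<xi> l k s l k = s"
  unfolding upd_slot_def by simp

lemma upd_slot_other: "l' \<noteq> l \<Longrightarrow> upd_slot \<xi> l k s l' = \<xi> l'"
  unfolding upd_slot_def by simp

lemma avg_configs_resample:
  assumes "l \<in> slots" "k \<in> e"
  shows "avg configs g = avg configs (\<lambda>\<xi>. avg (W k) (\<lambda>s. g (upd_slot \<xi> l k s)))"
proof -
  define L where "L = slots - {l}"
  have slots: "slots = insert l L" "l \<notin> L" using assms unfolding L_def by auto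
  have points: "\<And>G. sum G (Vpts W e) = (\<Sum>x\<in>Vpts W e. avg (W k) (\<lambda>s. G (x(k := s))))"
    using avg_PiE_resample[of e k W] card_mult_avg[OF finite_points points_ne]
      finite_e finite_W W_ne assms(2) by metis
  have "(\<Sum>\<xi>\<in>configs. avg (W k) (\<lambda>s. g (upd_slot \<xi> l k s))) =
      (\<Sum>x\<in>Vpts W e. \<Sum>h\<in>PiE L (\<lambda>_. Vpts W e). avg (W k) (\<lambda>s. g (h(l := x(k := s)))))"
    unfolding configs_def slots(1) by (subst sum_PiE_insert[OF slots(2)]) (simp add: upd_slot_def)
  also have "\<dots> = (\<Sum>h\<in>PiE L (\<lambda>_. Vpts W e). \<Sum>x\<in>Vpts W e. g (h(l := x)))"
    by (subst sum.swap) (simp add: points[of "\<lambda>x. g (_(l := x))"])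
  also have "\<dots> = (\<Sum>\<xi>\<in>configs. g \<xi>)"
    unfolding configs_def slots(1) by (subst sum_PiE_insert[OF slots(2)]) (rule sum.swap)
  finally show ?thesis unfolding avg_def by simp
qed

lemma avg_configs_cube_pair:
  "avg configs (\<lambda>\<xi>. F (\<xi> Cube0) (\<xi> Cube1)) = avg (Vpts W e \<times> Vpts W e) (\<lambda>(x, y). F x y)"
proof -
  let ?P = "PiE {Cube0, Cube1 :: 'i slot} (\<lambda>_. Vpts W e)"
  have "avg configs (\<lambda>\<xi>. F (\<xi> Cube0) (\<xi> Cube1)) = avg ?P (\<lambda>\<zeta>. F (\<zeta> Cube0) (\<zeta> Cube1))"
    unfolding configs_def
    using avg_PiE_restrict[of slots "{Cube0, Cube1 :: 'i slot}" "\<lambda>_. Vpts W e" "\<lambda>\<zeta>. F (\<zeta> Cube0) (\<zeta> Cube1)"]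
      finite_slots finite_points points_ne by simp
  moreover have "(\<Sum>\<zeta>\<in>?P. F (\<zeta> Cube0) (\<zeta> Cube1)) = (\<Sum>x\<in>Vpts W e. \<Sum>y\<in>Vpts W e. F x y)"
    by (simp add: sum_PiE_insert)
  moreover have "card ?P = card (Vpts W e) * card (Vpts W e)"
    by (simp add: card_PiE)
  ultimately show ?thesis
    unfolding avg_def by (simp add: sum.cartesian_product card_cartesian_product split_def)
qed

lemma interpolant_empty:
  "interpolant f {} = avg (Vpts W e \<times> Vpts W e) (\<lambda>(x, y). \<Prod>\<theta>\<in>cube e. nu (mix e \<theta> x y) - 1)"
proof -
  have "lower_face {} = cube e" unfolding lower_face_def by simp
  moreover have "vertex \<xi> (slot_of {} i \<theta>) = mix e \<theta> (\<xi> Cube0) (\<xi> Cube1)" for \<xi> i \<theta>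
    unfolding vertex_def slot_of_def mix_def by (auto simp: fun_eq_iff restrict_def)
  ultimately have "interpolant f {} =
      avg configs (\<lambda>\<xi>. (\<lambda>x y. \<Prod>\<theta>\<in>cube e. nu (mix e \<theta> x y) - 1) (\<xi> Cube0) (\<xi> Cube1))"
    unfolding interpolant_def integrand_def by simp
  also have "\<dots> = avg (Vpts W e \<times> Vpts W e) (\<lambda>(x, y). \<Prod>\<theta>\<in>cube e. nu (mix e \<theta> x y) - 1)"
    by (rule avg_configs_cube_pair)
  finally show ?thesis .
qed

lemma interpolant_full:
  "interpolant f e = avg (Vpts W e) (\<lambda>x. (nu x - 1) * (\<Prod>i\<in>I. dual W e (f i) x))"
proof -
  define D where "D i x y = (\<Prod>\<theta>\<in>cube e - {zero_cube e}. f i (mix e \<theta> x y))" for i x y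
  define S where "S = insert Base (Dual ` I)"
  define g where "g \<zeta> = (nu (\<zeta> Base) - 1) * (\<Prod>i\<in>I. D i (\<zeta> Base) (\<zeta> (Dual i)))" for \<zeta>
  have lower_face_e: "lower_face e = {zero_cube e}"
    unfolding lower_face_def cube_def zero_cube_def by (auto simp: fun_eq_iff PiE_iff extensional_def)
  have "integrand f e \<xi> = g (restrict \<xi> S)" if "\<xi> \<in> configs" for \<xi>
  proof -
    have "\<xi> Base \<in> Vpts W e" using that by (simp add: config_in_points)
    then have "vertex \<xi> (slot_of e i (zero_cube e)) = \<xi> Base" for i
      unfolding vertex_def slot_of_def zero_cube_def by (auto simp: fun_eq_iff PiE_iff extensional_def)
    moreover have "vertex \<xi> (slot_of e i \<theta>) = mix e \<theta> (\<xi> Base) (\<xi> (Dual i))" for i \<theta>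
      unfolding vertex_def slot_of_def mix_def by (auto simp: fun_eq_iff restrict_def)
    ultimately show ?thesis
      unfolding integrand_def lower_face_e g_def S_def D_def by simp
  qed
  then have "interpolant f e = avg configs (\<lambda>\<xi>. g (restrict \<xi> S))"
    unfolding interpolant_def by (rule avg_cong)
  also have "\<dots> = avg (PiE S (\<lambda>_. Vpts W e)) g"
    unfolding configs_def using finite_slots finite_points points_ne
    by (intro avg_PiE_restrict) (auto simp: S_def slots_def)
  also have "\<dots> = avg (Vpts W e) (\<lambda>x. (nu x - 1) * (\<Prod>i\<in>I. avg (Vpts W e) (D i x)))"
    unfolding S_def g_def using finite_I finite_points points_ne
    by (intro avg_PiE_insert_image) (auto simp: inj_on_def)
  finally show ?thesis unfolding dual_def D_def .
qed

definition upper_facet :: "'j \<Rightarrow> ('j \<Rightarrow> bool) set" where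
  "upper_facet j = {\<theta> \<in> cube e. \<theta> j}"

text \<open>For \<open>j \<in> R\<close> the vertices with \<open>\<theta> j\<close> read coordinate \<open>j\<close> from \<open>Dual i\<close>, all other vertices
  read it from \<open>Base\<close>. Hence the integrand splits into factors that are resampled independently.\<close>

definition dual_part :: "('i \<Rightarrow> ('j \<Rightarrow> 'a) \<Rightarrow> real) \<Rightarrow> 'j set \<Rightarrow> 'j \<Rightarrow> 'i \<Rightarrow> ('i slot \<Rightarrow> 'j \<Rightarrow> 'a) \<Rightarrow> real" where
  "dual_part f R j i \<xi> = (\<Prod>\<theta>\<in>upper_facet j. f i (vertex \<xi> (slot_of R i \<theta>)))"

definition rest_part :: "('i \<Rightarrow> ('j \<Rightarrow> 'a) \<Rightarrow> real) \<Rightarrow> 'j set \<Rightarrow> 'j \<Rightarrow> ('i slot \<Rightarrow> 'j \<Rightarrow> 'a) \<Rightarrow> real" where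
  "rest_part f R j \<xi> =
     (\<Prod>\<theta>\<in>lower_face R. nu (vertex \<xi> (slot_of R undefined \<theta>)) - 1) *
     (\<Prod>i\<in>I. \<Prod>\<theta>\<in>{\<theta> \<in> cube e - lower_face R. \<not> \<theta> j}. f i (vertex \<xi> (slot_of R i \<theta>)))"

definition dual_avg :: "('i \<Rightarrow> ('j \<Rightarrow> 'a) \<Rightarrow> real) \<Rightarrow> 'j set \<Rightarrow> 'j \<Rightarrow> 'i \<Rightarrow> ('i slot \<Rightarrow> 'j \<Rightarrow> 'a) \<Rightarrow> real" where
  "dual_avg f R j i \<xi> = avg (W j) (\<lambda>s. dual_part f R j i (upd_slot \<xi> (Dual i) j s))"

definition rest_avg :: "('i \<Rightarrow> ('j \<Rightarrow> 'a) \<Rightarrow> real) \<Rightarrow> 'j set \<Rightarrow> 'j \<Rightarrow> ('i slot \<Rightarrow> 'j \<Rightarrow> 'a) \<Rightarrow> real" where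
  "rest_avg f R j \<xi> = avg (W j) (\<lambda>s. rest_part f R j (upd_slot \<xi> Base j s))"

lemma integrand_split:
  assumes "j \<in> R"
  shows "integrand f R \<xi> = (\<Prod>i\<in>I. dual_part f R j i \<xi>) * rest_part f R j \<xi>"
proof -
  have split: "cube e - lower_face R = upper_facet j \<union> {\<theta> \<in> cube e - lower_face R. \<not> \<theta> j}"
    and disjoint: "upper_facet j \<inter> {\<theta> \<in> cube e - lower_face R. \<not> \<theta> j} = {}"
    using assms unfolding lower_face_def upper_facet_def by auto
  have "finite (cube e - lower_face R)" using finite_cube[OF finite_e] by simp
  then have "(\<Prod>\<theta>\<in>cube e - lower_face R. g \<theta>) =
      (\<Prod>\<theta>\<in>upper_facet j. g \<theta>) * (\<Prod>\<theta>\<in>{\<theta> \<in> cube e - lower_face R. \<not> \<theta> j}. g \<theta>)" for g :: "_ \<Rightarrow> real"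
    by (subst split, subst prod.union_disjoint) (use split disjoint in auto)
  then show ?thesis
    unfolding integrand_def dual_part_def rest_part_def by (simp add: prod.distrib mult_ac)
qed

lemma dual_part_upd_slot_other:
  assumes "j \<in> R" "l \<noteq> Dual i"
  shows "dual_part f R j i (upd_slot \<xi> l j s) = dual_part f R j i \<xi>"
  unfolding dual_part_def
  by (rule prod.cong[OF refl], rule arg_cong[where f = "f i"], rule vertex_upd_slot_other)
     (use assms in \<open>auto simp: slot_of_def upper_facet_def\<close>)

lemma rest_part_upd_slot_other:
  assumes "j \<in> R" "l \<noteq> Base"
  shows "rest_part f R j (upd_slot \<xi> l j s) = rest_part f R j \<xi>"
proof -
  have vertex: "vertex (upd_slot \<xi> l j s) (slot_of R i \<theta>) = vertex \<xi> (slot_of R i \<theta>)"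
    if "\<not> \<theta> j" for i \<theta>
    using that assms by (intro vertex_upd_slot_other) (auto simp: slot_of_def)
  have "(\<Prod>\<theta>\<in>lower_face R. nu (vertex (upd_slot \<xi> l j s) (slot_of R undefined \<theta>)) - 1) =
      (\<Prod>\<theta>\<in>lower_face R. nu (vertex \<xi> (slot_of R undefined \<theta>)) - 1)"
    using assms by (intro prod.cong) (auto simp: lower_face_def vertex)
  then show ?thesis unfolding rest_part_def by (simp add: vertex)
qed

lemma dual_avg_upd_slot_other:
  assumes "j \<in> R" "i' \<noteq> i"
  shows "dual_avg f R j i (upd_slot \<xi> (Dual i') j t) = dual_avg f R j i \<xi>"
  unfolding dual_avg_def by (simp add: upd_slot_commute[of "Dual i'" "Dual i"] assms dual_part_upd_slot_other)

lemma rest_avg_upd_slot_other: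
  assumes "j \<in> R" "l \<noteq> Base"
  shows "rest_avg f R j (upd_slot \<xi> l j t) = rest_avg f R j \<xi>"
  unfolding rest_avg_def by (simp add: upd_slot_commute[of l Base] assms rest_part_upd_slot_other)

lemma avg_configs_mult_resample:
  assumes "l \<in> slots" "k \<in> e" "\<And>\<xi> s. r (upd_slot \<xi> l k s) = r \<xi>"
  shows "avg configs (\<lambda>\<xi>. r \<xi> * g \<xi>) = avg configs (\<lambda>\<xi>. r \<xi> * avg (W k) (\<lambda>s. g (upd_slot \<xi> l k s)))"
  by (subst avg_configs_resample[OF assms(1,2)]) (simp add: assms(3) avg_mult_left)

lemma interpolant_eq_avg_dual_part_rest_avg:
  assumes "j \<in> R" "j \<in> e"
  shows "interpolant f R = avg configs (\<lambda>\<xi>. (\<Prod>i\<in>I. dual_part f R j i \<xi>) * rest_avg f R j \<xi>)"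
  unfolding interpolant_def integrand_split[OF assms(1)] rest_avg_def
  by (rule avg_configs_mult_resample) (simp_all add: assms dual_part_upd_slot_other)

lemma interpolant_eq_avg_dual_avg_rest_avg:
  assumes "j \<in> R" "j \<in> e"
  shows "interpolant f R = avg configs (\<lambda>\<xi>. (\<Prod>i\<in>I. dual_avg f R j i \<xi>) * rest_avg f R j \<xi>)"
proof -
  let ?F = "\<lambda>J \<xi>. (\<Prod>i\<in>J. dual_avg f R j i \<xi>) * (\<Prod>i\<in>I - J. dual_part f R j i \<xi>) * rest_avg f R j \<xi>"
  have "avg configs (?F J) = interpolant f R" if "J \<subseteq> I" for J
    using finite_subset[OF that finite_I] that
  proof (induction J rule: finite_subset_induct)
    case empty
    show ?case by (simp add: interpolant_eq_avg_dual_part_rest_avg[OF assms])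
  next
    case (insert i1 J)
    define r where "r \<xi> = (\<Prod>i\<in>J. dual_avg f R j i \<xi>) * (\<Prod>i\<in>I - insert i1 J. dual_part f R j i \<xi>) *
      rest_avg f R j \<xi>" for \<xi>
    have I: "I - J = insert i1 (I - insert i1 J)" using insert by auto
    have "(\<Prod>i\<in>I - J. g i) = g i1 * (\<Prod>i\<in>I - insert i1 J. g i)" for g :: "'i \<Rightarrow> real"
      unfolding I by (rule prod.insert) (use finite_I in auto)
    then have old: "?F J \<xi> = r \<xi> * dual_part f R j i1 \<xi>" for \<xi>
      unfolding r_def by (simp add: mult_ac)
    have new: "?F (insert i1 J) \<xi> = r \<xi> * dual_avg f R j i1 \<xi>" for \<xi>
      unfolding r_def using insert.hyps by (simp add: mult_ac)
    have "r (upd_slot \<xi> (Dual i1) j s) = r \<xi>" for \<xi> s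
    proof -
      have "(\<Prod>i\<in>J. dual_avg f R j i (upd_slot \<xi> (Dual i1) j s)) = (\<Prod>i\<in>J. dual_avg f R j i \<xi>)"
        using insert.hyps assms by (intro prod.cong refl dual_avg_upd_slot_other) auto
      moreover have "(\<Prod>i\<in>I - insert i1 J. dual_part f R j i (upd_slot \<xi> (Dual i1) j s)) =
          (\<Prod>i\<in>I - insert i1 J. dual_part f R j i \<xi>)"
        using assms by (intro prod.cong) (auto simp: dual_part_upd_slot_other)
      ultimately show ?thesis unfolding r_def by (simp add: assms rest_avg_upd_slot_other)
    qed
    then have "avg configs (\<lambda>\<xi>. r \<xi> * dual_part f R j i1 \<xi>) = avg configs (\<lambda>\<xi>. r \<xi> * dual_avg f R j i1 \<xi>)"
      unfolding dual_avg_def using insert assms by (intro avg_configs_mult_resample) auto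
    then show ?case using insert.IH unfolding old new by simp
  qed
  from this[of I] show ?thesis by simp
qed

lemma vertex_reset_Cube0:
  "j \<in> R \<Longrightarrow> \<not> \<theta> j \<Longrightarrow>
    vertex (upd_slot \<xi> Base j (\<xi> Cube0 j)) (slot_of R i \<theta>) = vertex \<xi> (slot_of (R - {j}) i \<theta>)"
  unfolding vertex_def upd_slot_def slot_of_def by (auto simp: fun_eq_iff restrict_def)

lemma vertex_reset_Cube1:
  "j \<in> R \<Longrightarrow> \<not> \<theta> j \<Longrightarrow>
    vertex (upd_slot \<xi> Base j (\<xi> Cube1 j)) (slot_of R i \<theta>) = vertex \<xi> (slot_of (R - {j}) i (\<theta>(j := True)))"
  unfolding vertex_def upd_slot_def slot_of_def by (auto simp: fun_eq_iff restrict_def)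

lemma rest_part_reset_mult:
  assumes "j \<in> R" "R \<subseteq> e"
  shows "rest_part f R j (upd_slot \<xi> Base j (\<xi> Cube0 j)) * rest_part f R j (upd_slot \<xi> Base j (\<xi> Cube1 j)) =
    integrand f (R - {j}) \<xi>"
proof -
  define P where "P \<theta> \<longleftrightarrow> (\<forall>k\<in>R - {j}. \<not> \<theta> k)" for \<theta> :: "'j \<Rightarrow> bool"
  let ?A = "lower_face R" and ?B = "{\<theta> \<in> cube e - lower_face R. \<not> \<theta> j}"
  have j: "j \<in> e" "\<And>\<theta> c. P (\<theta>(j := c)) = P \<theta>" "\<And>\<theta> c. (\<not> P (\<theta>(j := c))) = (\<not> P \<theta>)"
    using assms unfolding P_def by auto
  have A: "{\<theta> \<in> cube e. P \<theta> \<and> \<not> \<theta> j} = ?A" and B: "{\<theta> \<in> cube e. \<not> P \<theta> \<and> \<not> \<theta> j} = ?B"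
    using assms(1) unfolding P_def lower_face_def by auto
  have split_nu: "(\<Prod>\<theta>\<in>lower_face (R - {j}). g \<theta>) = (\<Prod>\<theta>\<in>?A. g \<theta>) * (\<Prod>\<theta>\<in>?A. g (\<theta>(j := True)))"
    for g :: "_ \<Rightarrow> real"
    using cube_split_coordinate[OF j(1) finite_e, of P g, OF j(2)] unfolding A
    by (simp add: lower_face_def P_def)
  have split_f: "(\<Prod>\<theta>\<in>cube e - lower_face (R - {j}). g \<theta>) = (\<Prod>\<theta>\<in>?B. g \<theta>) * (\<Prod>\<theta>\<in>?B. g (\<theta>(j := True)))"
    for g :: "_ \<Rightarrow> real"
  proof -
    have "cube e - lower_face (R - {j}) = {\<theta> \<in> cube e. \<not> P \<theta>}" unfolding lower_face_def P_def by auto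
    then show ?thesis using cube_split_coordinate[OF j(1) finite_e, of "\<lambda>\<theta>. \<not> P \<theta>" g, OF j(3)]
      unfolding B by simp
  qed
  have not_j: "\<not> \<theta> j" if "\<theta> \<in> ?A \<union> ?B" for \<theta>
    using that assms(1) by (auto simp: lower_face_def)
  have reset:
    "vertex (upd_slot \<xi> Base j (\<xi> Cube0 j)) (slot_of R i \<theta>) = vertex \<xi> (slot_of (R - {j}) i \<theta>)"
    "vertex (upd_slot \<xi> Base j (\<xi> Cube1 j)) (slot_of R i \<theta>) =
      vertex \<xi> (slot_of (R - {j}) i (\<theta>(j := True)))"
    if "\<theta> \<in> ?A \<union> ?B" for i \<theta>
    using not_j[OF that] assms(1) by (simp_all add: vertex_reset_Cube0 vertex_reset_Cube1)
  have "rest_part f R j (upd_slot \<xi> Base j (\<xi> Cube0 j)) =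
      (\<Prod>\<theta>\<in>?A. nu (vertex \<xi> (slot_of (R - {j}) undefined \<theta>)) - 1) *
      (\<Prod>i\<in>I. \<Prod>\<theta>\<in>?B. f i (vertex \<xi> (slot_of (R - {j}) i \<theta>)))"
    unfolding rest_part_def by (intro arg_cong2[where f = "(*)"] prod.cong refl) (simp_all add: reset)
  moreover have "rest_part f R j (upd_slot \<xi> Base j (\<xi> Cube1 j)) =
      (\<Prod>\<theta>\<in>?A. nu (vertex \<xi> (slot_of (R - {j}) undefined (\<theta>(j := True)))) - 1) *
      (\<Prod>i\<in>I. \<Prod>\<theta>\<in>?B. f i (vertex \<xi> (slot_of (R - {j}) i (\<theta>(j := True)))))"
    unfolding rest_part_def by (intro arg_cong2[where f = "(*)"] prod.cong refl) (simp_all add: reset)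
  ultimately show ?thesis
    unfolding integrand_def split_nu split_f by (simp add: prod.distrib mult_ac)
qed

text \<open>Resampling coordinate \<open>j\<close> of \<open>Cube0\<close> and \<open>Cube1\<close> turns the square of the \<open>Base\<close>-average
  into the integrand in which coordinate \<open>j\<close> has been moved back to the cube pair.\<close>

lemma avg_rest_avg_square:
  assumes "j \<in> R" "R \<subseteq> e"
  shows "avg configs (\<lambda>\<xi>. (rest_avg f R j \<xi>)\<^sup>2) = interpolant f (R - {j})"
proof -
  have j: "j \<in> e" using assms by auto
  define G where "G \<xi> = rest_part f R j (upd_slot \<xi> Base j (\<xi> Cube0 j)) *
    rest_part f R j (upd_slot \<xi> Base j (\<xi> Cube1 j))" for \<xi>
  have G: "G (upd_slot (upd_slot \<xi> Cube1 j t) Cube0 j s) =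
      rest_part f R j (upd_slot \<xi> Base j s) * rest_part f R j (upd_slot \<xi> Base j t)" for \<xi> s t
  proof -
    have "rest_part f R j (upd_slot (upd_slot (upd_slot \<xi> Cube1 j t) Cube0 j s) Base j v) =
        rest_part f R j (upd_slot \<xi> Base j v)" for v
      by (simp add: upd_slot_commute[of Cube0 Base] upd_slot_commute[of Cube1 Base]
          rest_part_upd_slot_other assms)
    then show ?thesis unfolding G_def by (simp add: upd_slot_same upd_slot_other)
  qed
  have "interpolant f (R - {j}) = avg configs G"
    unfolding interpolant_def G_def using rest_part_reset_mult[OF assms] by simp
  also have "\<dots> = avg configs (\<lambda>\<xi>. avg (W j) (\<lambda>t. avg (W j) (\<lambda>s. G (upd_slot (upd_slot \<xi> Cube1 j t) Cube0 j s))))"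
    by (subst avg_configs_resample[of Cube0 j], simp_all add: j)
       (subst avg_configs_resample[of Cube1 j], simp_all add: j)
  also have "\<dots> = avg configs (\<lambda>\<xi>. (rest_avg f R j \<xi>)\<^sup>2)"
    unfolding G rest_avg_def by (simp add: avg_mult_left avg_mult_right power2_eq_square)
  finally show ?thesis ..
qed

abbreviation nu_majorized :: "('i \<Rightarrow> ('j \<Rightarrow> 'a) \<Rightarrow> real) \<Rightarrow> bool" where
  "nu_majorized f \<equiv> \<forall>i\<in>I. \<forall>x\<in>Vpts W e. \<bar>f i x\<bar> \<le> nu x + 1"

definition dual_majorant :: "'j set \<Rightarrow> 'j \<Rightarrow> 'i \<Rightarrow> ('i slot \<Rightarrow> 'j \<Rightarrow> 'a) \<Rightarrow> real" where
  "dual_majorant R j i \<xi> =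
     avg (W j) (\<lambda>s. \<Prod>\<theta>\<in>upper_facet j. nu (vertex (upd_slot \<xi> (Dual i) j s) (slot_of R i \<theta>)) + 1)"

lemma abs_dual_avg_le_dual_majorant:
  assumes "\<xi> \<in> configs" "i \<in> I" "j \<in> e" "nu_majorized f"
  shows "\<bar>dual_avg f R j i \<xi>\<bar> \<le> dual_majorant R j i \<xi>"
proof -
  have "\<bar>dual_part f R j i \<zeta>\<bar> \<le> (\<Prod>\<theta>\<in>upper_facet j. nu (vertex \<zeta> (slot_of R i \<theta>)) + 1)"
    if "\<zeta> \<in> configs" for \<zeta>
    unfolding dual_part_def abs_prod
    using assms(2,4) vertex_in_points[OF that slot_of_in_slots[OF assms(2)]] by (intro prod_mono) auto
  then have "avg (W j) (\<lambda>s. \<bar>dual_part f R j i (upd_slot \<xi> (Dual i) j s)\<bar>) \<le> dual_majorant R j i \<xi>"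
    unfolding dual_majorant_def using assms by (intro avg_mono) (simp add: upd_slot_in_configs)
  then show ?thesis unfolding dual_avg_def by (rule order_trans[OF abs_avg_le])
qed

lemma avg_dual_avg_square_le:
  assumes "j \<in> e" "nu_majorized f"
  shows "avg configs (\<lambda>\<xi>. (\<Prod>i\<in>I. dual_avg f R j i \<xi>)\<^sup>2) \<le>
    1 + (\<Sum>i\<in>I. avg configs (\<lambda>\<xi>. dual_majorant R j i \<xi> ^ (2 * card I)))"
proof -
  have "(\<Prod>i\<in>I. dual_avg f R j i \<xi>)\<^sup>2 \<le> 1 + (\<Sum>i\<in>I. dual_majorant R j i \<xi> ^ (2 * card I))"
    if "\<xi> \<in> configs" for \<xi>
  proof -
    have "\<bar>\<Prod>i\<in>I. dual_avg f R j i \<xi>\<bar> \<le> (\<Prod>i\<in>I. dual_majorant R j i \<xi>)"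
      unfolding abs_prod using that assms abs_dual_avg_le_dual_majorant by (intro prod_mono) auto
    then have "(\<Prod>i\<in>I. dual_avg f R j i \<xi>)\<^sup>2 \<le> (\<Prod>i\<in>I. (dual_majorant R j i \<xi>)\<^sup>2)"
      by (metis abs_ge_zero power2_abs power_mono prod_power_distrib)
    also have "\<dots> \<le> 1 + (\<Sum>i\<in>I. ((dual_majorant R j i \<xi>)\<^sup>2) ^ card I)"
      by (rule prod_le_one_plus_sum_power[OF finite_I]) simp
    finally show ?thesis by (simp add: power_mult)
  qed
  then have "avg configs (\<lambda>\<xi>. (\<Prod>i\<in>I. dual_avg f R j i \<xi>)\<^sup>2) \<le>
      avg configs (\<lambda>\<xi>. 1 + (\<Sum>i\<in>I. dual_majorant R j i \<xi> ^ (2 * card I)))"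
    by (rule avg_mono)
  then show ?thesis by (simp add: avg_add avg_sum avg_const finite_configs configs_ne)
qed

definition link_weight :: "'j \<Rightarrow> ('j \<Rightarrow> 'a) \<Rightarrow> ('j \<Rightarrow> 'a) \<Rightarrow> real" where
  "link_weight j z0 z1 = avg (W j) (\<lambda>s. \<Prod>\<theta>\<in>upper_facet j. nu (mix e \<theta> z0 (z1(j := s))) + 1)"

definition link_moment :: "'j \<Rightarrow> nat \<Rightarrow> real" where
  "link_moment j p =
     avg (Vpts W (e - {j}) \<times> Vpts W (e - {j})) (\<lambda>(z0, z1). link_weight j z0 z1 ^ p)"

definition merge :: "'j set \<Rightarrow> ('j \<Rightarrow> 'a) \<Rightarrow> ('j \<Rightarrow> 'a) \<Rightarrow> 'j \<Rightarrow> 'a" where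
  "merge R x y = (\<lambda>k. if k \<in> R then x k else y k)"

text \<open>Exchanging the \<open>R\<close>-coordinates of \<open>Base\<close> with \<open>Cube0\<close> and of \<open>Dual i\<close> with \<open>Cube1\<close> is a
  measure preserving involution of the configurations; it turns the vertices of \<open>upper_facet j\<close>
  in a \<open>dual_majorant\<close> into ordinary vertices of the cube pair.\<close>

definition swap_slots :: "'j set \<Rightarrow> 'i \<Rightarrow> ('i slot \<Rightarrow> 'j \<Rightarrow> 'a) \<Rightarrow> 'i slot \<Rightarrow> 'j \<Rightarrow> 'a" where
  "swap_slots R i \<xi> = \<xi>(Cube0 := merge R (\<xi> Base) (\<xi> Cube0), Cube1 := merge R (\<xi> (Dual i)) (\<xi> Cube1),
     Base := merge R (\<xi> Cube0) (\<xi> Base), Dual i := merge R (\<xi> Cube1) (\<xi> (Dual i)))"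

lemma swap_slots_in_configs:
  assumes "\<xi> \<in> configs" "i \<in> I" "R \<subseteq> e"
  shows "swap_slots R i \<xi> \<in> configs"
proof -
  have "merge R x y \<in> Vpts W e" if "x \<in> Vpts W e" "y \<in> Vpts W e" for x y
    using that assms(3) unfolding merge_def by (auto simp: PiE_iff extensional_def)
  then show ?thesis
    using assms(1,2) config_in_points[OF assms(1)] unfolding configs_def swap_slots_def
    by (auto simp: PiE_iff extensional_def)
qed

lemma swap_slots_swap_slots: "swap_slots R i (swap_slots R i \<xi>) = \<xi>"
  unfolding swap_slots_def merge_def by (auto simp: fun_eq_iff)

lemma avg_configs_swap_slots:
  assumes "i \<in> I" "R \<subseteq> e"
  shows "avg configs (\<lambda>\<xi>. G (swap_slots R i \<xi>)) = avg configs G"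
proof -
  have "sum (\<lambda>\<xi>. G (swap_slots R i \<xi>)) configs = sum G configs"
    using assms swap_slots_in_configs swap_slots_swap_slots
    by (intro sum.reindex_bij_witness[of _ "swap_slots R i" "swap_slots R i"]) auto
  then show ?thesis unfolding avg_def by simp
qed

lemma dual_majorant_swap_slots:
  assumes "j \<in> R" "R \<subseteq> e"
  shows "dual_majorant R j i \<xi> =
    link_weight j (restrict (swap_slots R i \<xi> Cube0) (e - {j})) (restrict (swap_slots R i \<xi> Cube1) (e - {j}))"
proof -
  have "vertex (upd_slot \<xi> (Dual i) j s) (slot_of R i \<theta>) =
      mix e \<theta> (restrict (swap_slots R i \<xi> Cube0) (e - {j})) ((restrict (swap_slots R i \<xi> Cube1) (e - {j}))(j := s))"
    if "\<theta> j" for s \<theta>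
    using assms that unfolding vertex_def upd_slot_def slot_of_def mix_def swap_slots_def merge_def
    by (auto simp: fun_eq_iff restrict_def)
  then show ?thesis
    unfolding dual_majorant_def link_weight_def by (auto simp: upper_facet_def intro!: avg_cong prod.cong)
qed

lemma avg_dual_majorant_power:
  assumes "j \<in> R" "R \<subseteq> e" "i \<in> I"
  shows "avg configs (\<lambda>\<xi>. dual_majorant R j i \<xi> ^ p) = link_moment j p"
proof -
  define G where "G \<zeta> = link_weight j (restrict (\<zeta> Cube0) (e - {j})) (restrict (\<zeta> Cube1) (e - {j})) ^ p"
    for \<zeta> :: "'i slot \<Rightarrow> 'j \<Rightarrow> 'a"
  have "avg configs (\<lambda>\<xi>. dual_majorant R j i \<xi> ^ p) = avg configs (\<lambda>\<xi>. G (swap_slots R i \<xi>))"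
    unfolding G_def dual_majorant_swap_slots[OF assms(1,2)] ..
  also have "\<dots> = avg configs G" by (rule avg_configs_swap_slots[OF assms(3,2)])
  also have "\<dots> = avg (Vpts W e \<times> Vpts W e)
      (\<lambda>(x, y). link_weight j (restrict x (e - {j})) (restrict y (e - {j})) ^ p)"
    unfolding G_def by (rule avg_configs_cube_pair)
  also have "\<dots> = link_moment j p"
    unfolding link_moment_def using finite_e finite_W W_ne
    by (intro avg_PiE_Times_restrict[of e "e - {j}" W "\<lambda>x y. link_weight j x y ^ p"]) auto
  finally show ?thesis .
qed

lemma interpolant_Diff_nonneg: "j \<in> R \<Longrightarrow> R \<subseteq> e \<Longrightarrow> 0 \<le> interpolant f (R - {j})"
  by (simp flip: avg_rest_avg_square add: avg_nonneg)

lemma interpolant_square_le: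
  assumes "j \<in> R" "R \<subseteq> e" "nu_majorized f"
  shows "(interpolant f R)\<^sup>2 \<le> (1 + real (card I) * link_moment j (2 * card I)) * interpolant f (R - {j})"
proof -
  have j: "j \<in> e" using assms by auto
  have "(interpolant f R)\<^sup>2 \<le> avg configs (\<lambda>\<xi>. (\<Prod>i\<in>I. dual_avg f R j i \<xi>)\<^sup>2) * interpolant f (R - {j})"
    unfolding interpolant_eq_avg_dual_avg_rest_avg[OF assms(1) j] avg_rest_avg_square[OF assms(1,2), symmetric]
    by (rule avg_Cauchy_Schwarz)
  also have "\<dots> \<le> (1 + (\<Sum>i\<in>I. avg configs (\<lambda>\<xi>. dual_majorant R j i \<xi> ^ (2 * card I)))) * interpolant f (R - {j})"
    using avg_dual_avg_square_le[OF j assms(3)] interpolant_Diff_nonneg[OF assms(1,2)] by (rule mult_right_mono)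
  also have "\<dots> = (1 + real (card I) * link_moment j (2 * card I)) * interpolant f (R - {j})"
    using avg_dual_majorant_power[OF assms(1,2)] by simp
  finally show ?thesis .
qed

lemma abs_interpolant_power_le:
  assumes "\<And>j. j \<in> e \<Longrightarrow> link_moment j (2 * card I) \<le> C" "0 \<le> C" "nu_majorized f" "R \<subseteq> e"
  shows "\<bar>interpolant f R\<bar> ^ 2 ^ card R \<le> (1 + real (card I) * C) ^ (2 ^ card R - 1) * \<bar>interpolant f {}\<bar>"
  using finite_subset[OF assms(4) finite_e] assms(4)
proof (induction R rule: finite_induct)
  case (insert j R)
  define \<Gamma> where "\<Gamma> = 1 + real (card I) * C"
  have \<Gamma>: "0 \<le> \<Gamma>" unfolding \<Gamma>_def using assms(2) by simp
  have R: "insert j R - {j} = R" using insert.hyps by auto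
  have "\<bar>interpolant f (insert j R)\<bar>\<^sup>2 \<le> (1 + real (card I) * link_moment j (2 * card I)) * \<bar>interpolant f R\<bar>"
    using interpolant_square_le[of j "insert j R" f] interpolant_Diff_nonneg[of j "insert j R" f] insert.prems assms(3)
    by (simp add: R)
  also have "\<dots> \<le> \<Gamma> * \<bar>interpolant f R\<bar>"
    unfolding \<Gamma>_def using assms(1) insert.prems by (intro mult_right_mono) (auto intro: mult_left_mono)
  finally have step: "\<bar>interpolant f (insert j R)\<bar>\<^sup>2 \<le> \<Gamma> * \<bar>interpolant f R\<bar>" .
  have "\<bar>interpolant f (insert j R)\<bar> ^ 2 ^ card (insert j R) = (\<bar>interpolant f (insert j R)\<bar>\<^sup>2) ^ 2 ^ card R"
    using insert.hyps by (simp add: power_mult)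
  also have "\<dots> \<le> (\<Gamma> * \<bar>interpolant f R\<bar>) ^ 2 ^ card R"
    using step by (intro power_mono) auto
  also have "\<dots> \<le> \<Gamma> ^ 2 ^ card R * (\<Gamma> ^ (2 ^ card R - 1) * \<bar>interpolant f {}\<bar>)"
    unfolding power_mult_distrib using insert \<Gamma> unfolding \<Gamma>_def by (intro mult_left_mono) auto
  also have "\<dots> = \<Gamma> ^ (2 ^ card (insert j R) - 1) * \<bar>interpolant f {}\<bar>"
  proof -
    have "2 ^ card R + (2 ^ card R - 1) = 2 ^ card (insert j R) - (1::nat)"
      using insert.hyps by simp
    then show ?thesis by (metis mult.assoc power_add)
  qed
  finally show ?case unfolding \<Gamma>_def .
qed simp

theorem dual_correlation_power_le:
  assumes "\<And>j. j \<in> e \<Longrightarrow> link_moment j (2 * card I) \<le> C" "0 \<le> C" "nu_majorized f"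
  shows "\<bar>avg (Vpts W e) (\<lambda>x. (nu x - 1) * (\<Prod>i\<in>I. dual W e (f i) x))\<bar> ^ 2 ^ card e \<le>
    (1 + real (card I) * C) ^ (2 ^ card e - 1) *
    \<bar>avg (Vpts W e \<times> Vpts W e) (\<lambda>(x, y). \<Prod>\<theta>\<in>cube e. nu (mix e \<theta> x y) - 1)\<bar>"
  using abs_interpolant_power_le[OF assms order_refl] by (simp add: interpolant_full interpolant_empty)

text \<open>The inner average of pseudorandomness condition (iii), with exponents \<open>[\<theta> \<in> S]\<close>.\<close>

definition link_term :: "'j \<Rightarrow> ('j \<Rightarrow> bool) set \<Rightarrow> ('j \<Rightarrow> 'a) \<Rightarrow> ('j \<Rightarrow> 'a) \<Rightarrow> real" where
  "link_term j S z0 z1 = avg (W j \<times> W j)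
     (\<lambda>(y0, y1). \<Prod>\<theta>\<in>cube e. pw (\<theta> \<in> S) (nu (mix e \<theta> (z0(j := y0)) (z1(j := y1)))))"

lemma link_term_eq:
  assumes "j \<in> e" "S \<subseteq> upper_facet j"
  shows "link_term j S z0 z1 = avg (W j) (\<lambda>s. \<Prod>\<theta>\<in>S. nu (mix e \<theta> z0 (z1(j := s))))"
proof -
  have "(\<Prod>\<theta>\<in>cube e. pw (\<theta> \<in> S) (nu (mix e \<theta> (z0(j := y0)) (z1(j := s))))) =
      (\<Prod>\<theta>\<in>S. nu (mix e \<theta> z0 (z1(j := s))))" for y0 s
  proof -
    have S: "{\<theta> \<in> cube e. \<theta> \<in> S} = S" using assms(2) by (auto simp: upper_facet_def)
    have "mix e \<theta> (z0(j := y0)) (z1(j := s)) = mix e \<theta> z0 (z1(j := s))" if "\<theta> \<in> S" for \<theta>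
      using that assms unfolding upper_facet_def mix_def by (auto simp: fun_eq_iff restrict_def)
    then show ?thesis
      unfolding pw_def prod.inter_filter[OF finite_cube[OF finite_e], symmetric] S
      by (auto intro: prod.cong)
  qed
  then show ?thesis
    unfolding link_term_def avg_Times by (simp add: avg_const finite_W W_ne assms(1))
qed

lemma link_weight_eq_sum_link_term:
  assumes "j \<in> e"
  shows "link_weight j z0 z1 = (\<Sum>S\<in>Pow (upper_facet j). link_term j S z0 z1)"
proof -
  have "finite (upper_facet j)" unfolding upper_facet_def using finite_cube[OF finite_e] by simp
  then have "(\<Prod>\<theta>\<in>upper_facet j. nu (mix e \<theta> z0 (z1(j := s))) + 1) =
      (\<Sum>S\<in>Pow (upper_facet j). \<Prod>\<theta>\<in>S. nu (mix e \<theta> z0 (z1(j := s))))" for s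
    by (simp add: prod_add)
  then show ?thesis
    unfolding link_weight_def using assms by (simp add: avg_sum link_term_eq)
qed

lemma link_term_nonneg:
  assumes "j \<in> e" "z0 \<in> Vpts W (e - {j})" "z1 \<in> Vpts W (e - {j})"
  shows "0 \<le> link_term j S z0 z1"
proof -
  have "z(j := y) \<in> Vpts W e" if "z \<in> Vpts W (e - {j})" "y \<in> W j" for z y
    using that assms(1) by (auto simp: PiE_iff extensional_def)
  then have "mix e \<theta> (z0(j := y0)) (z1(j := y1)) \<in> Vpts W e" if "y0 \<in> W j" "y1 \<in> W j" for \<theta> y0 y1
    using that assms(2,3) unfolding mix_def by (auto simp: PiE_iff)
  then have "0 \<le> nu (mix e \<theta> (z0(j := y0)) (z1(j := y1)))" if "y0 \<in> W j" "y1 \<in> W j" for \<theta> y0 y1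
    using that nu_nonneg by blast
  then show ?thesis
    unfolding link_term_def pw_def by (intro avg_nonneg) (auto intro!: prod_nonneg)
qed

lemma link_moment_le:
  assumes "j \<in> e"
  shows "link_moment j p \<le> real (card (Pow (upper_facet j))) ^ p *
    (\<Sum>S\<in>Pow (upper_facet j). \<bar>avg (Vpts W (e - {j}) \<times> Vpts W (e - {j}))
      (\<lambda>(z0, z1). link_term j S z0 z1 ^ p)\<bar>)"
proof -
  let ?Z = "Vpts W (e - {j}) \<times> Vpts W (e - {j})" and ?N = "real (card (Pow (upper_facet j))) ^ p"
  have finite: "finite (Pow (upper_facet j))"
    unfolding upper_facet_def using finite_cube[OF finite_e] by simp
  have "link_moment j p \<le> avg ?Z (\<lambda>(z0, z1). ?N * (\<Sum>S\<in>Pow (upper_facet j). link_term j S z0 z1 ^ p))"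
    unfolding link_moment_def link_weight_eq_sum_link_term[OF assms]
    using finite assms link_term_nonneg
    by (intro avg_mono) (auto intro!: power_sum_le_card_power_mult_sum_power)
  also have "\<dots> = ?N * (\<Sum>S\<in>Pow (upper_facet j). avg ?Z (\<lambda>(z0, z1). link_term j S z0 z1 ^ p))"
    by (simp add: split_def avg_mult_left avg_sum)
  also have "\<dots> \<le> ?N * (\<Sum>S\<in>Pow (upper_facet j). \<bar>avg ?Z (\<lambda>(z0, z1). link_term j S z0 z1 ^ p)\<bar>)"
    by (intro mult_left_mono sum_mono) auto
  finally show ?thesis .
qed

end

section \<open>Consequences of pseudorandomness\<close>

lemma hypergraph_system_edge:
  assumes "hypergraph_system J V d H" "e \<in> H"
  shows "finite H" "e \<subseteq> J" "finite e" "\<And>k. k \<in> J \<Longrightarrow> finite (V n k) \<and> V n k \<noteq> {}"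
proof -
  have J: "finite J" and H: "H \<subseteq> Pow J"
    using assms(1) unfolding hypergraph_system_def by auto
  then show "finite H" by (meson finite_Pow_iff finite_subset)
  show "e \<subseteq> J" using H assms(2) by auto
  then show "finite e" using J by (rule finite_subset)
  show "\<And>k. k \<in> J \<Longrightarrow> finite (V n k) \<and> V n k \<noteq> {}"
    using assms(1) unfolding hypergraph_system_def by auto
qed

lemma pseudorandom_dual_product_setting:
  assumes "hypergraph_system J V d H" "pseudorandom J V H \<nu>" "e \<in> H" "finite I"
  shows "dual_product_setting e (V n) (\<nu> n e) I"
  using hypergraph_system_edge[OF assms(1,3)] assms(2-4)
  unfolding dual_product_setting_def pseudorandom_def system_of_measures_def by auto

lemma prod_pw_single_edge:
  fixes \<nu> :: "'j set \<Rightarrow> ('j \<Rightarrow> 'a) \<Rightarrow> real"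
  assumes "finite H" "e \<in> H" "finite e" "S \<subseteq> cube e"
  shows "(\<Prod>e'\<in>H. \<Prod>\<omega>\<in>cube e'. pw (e' = e \<and> \<omega> \<in> S) (\<nu> e' (mix e' \<omega> x0 x1))) =
    (\<Prod>\<theta>\<in>S. \<nu> e (mix e \<theta> (restrict x0 e) (restrict x1 e)))"
proof -
  have "(\<Prod>\<omega>\<in>cube e'. pw (e' = e \<and> \<omega> \<in> S) (\<nu> e' (mix e' \<omega> x0 x1))) =
      (if e' = e then \<Prod>\<theta>\<in>S. \<nu> e (mix e \<theta> x0 x1) else 1)" for e'
  proof (cases "e' = e")
    case True
    have "{\<omega> \<in> cube e. \<omega> \<in> S} = S" using assms(4) by auto
    then show ?thesis
      unfolding pw_def True
      using prod.inter_filter[OF finite_cube[OF assms(3)], of "\<lambda>\<omega>. \<nu> e (mix e \<omega> x0 x1)" "\<lambda>\<omega>. \<omega> \<in> S"]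
      by simp
  qed (simp add: pw_def)
  then show ?thesis using assms(1,2) by (simp flip: mix_restrict)
qed

text \<open>Condition (ii) with exponents \<open>[e' = e \<and> \<theta> \<in> S]\<close>.\<close>

lemma pseudorandom_cube_moment_tendsto_1:
  assumes "hypergraph_system J V d H" "pseudorandom J V H \<nu>" "e \<in> H" "S \<subseteq> cube e"
  shows "(\<lambda>n. avg (Vpts (V n) e \<times> Vpts (V n) e) (\<lambda>(x, y). \<Prod>\<theta>\<in>S. \<nu> n e (mix e \<theta> x y))) \<longlonglongrightarrow> 1"
proof -
  note edge = hypergraph_system_edge[OF assms(1,3)]
  have "\<forall>ex. (\<lambda>n. avg (Vpts (V n) J \<times> Vpts (V n) J)
      (\<lambda>(x0, x1). \<Prod>e\<in>H. \<Prod>\<omega>\<in>cube e. pw (ex e \<omega>) (\<nu> n e (mix e \<omega> x0 x1)))) \<longlonglongrightarrow> 1"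
    using assms(2) unfolding pseudorandom_def by (elim conjE)
  note condition_ii = this[rule_format, of "\<lambda>e' \<omega>. e' = e \<and> \<omega> \<in> S"]
  have "avg (Vpts (V n) J \<times> Vpts (V n) J)
      (\<lambda>(x0, x1). \<Prod>e'\<in>H. \<Prod>\<omega>\<in>cube e'. pw (e' = e \<and> \<omega> \<in> S) (\<nu> n e' (mix e' \<omega> x0 x1))) =
      avg (Vpts (V n) e \<times> Vpts (V n) e) (\<lambda>(x, y). \<Prod>\<theta>\<in>S. \<nu> n e (mix e \<theta> x y))" for n
  proof -
    have "avg (Vpts (V n) J \<times> Vpts (V n) J)
        (\<lambda>(x0, x1). \<Prod>e'\<in>H. \<Prod>\<omega>\<in>cube e'. pw (e' = e \<and> \<omega> \<in> S) (\<nu> n e' (mix e' \<omega> x0 x1))) =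
        avg (Vpts (V n) J \<times> Vpts (V n) J)
        (\<lambda>(x0, x1). (\<lambda>x y. \<Prod>\<theta>\<in>S. \<nu> n e (mix e \<theta> x y)) (restrict x0 e) (restrict x1 e))"
      using edge assms(3,4) by (simp only: prod_pw_single_edge)
    also have "\<dots> = avg (Vpts (V n) e \<times> Vpts (V n) e) (\<lambda>(x, y). \<Prod>\<theta>\<in>S. \<nu> n e (mix e \<theta> x y))"
      using assms(1) edge(2) by (intro avg_PiE_Times_restrict) (auto simp: hypergraph_system_def)
    finally show ?thesis .
  qed
  with condition_ii show ?thesis by simp
qed

lemma pseudorandom_cube_avg_tendsto_0:
  assumes "hypergraph_system J V d H" "pseudorandom J V H \<nu>" "e \<in> H"
  shows "(\<lambda>n. avg (Vpts (V n) e \<times> Vpts (V n) e) (\<lambda>(x, y). \<Prod>\<theta>\<in>cube e. \<nu> n e (mix e \<theta> x y) - 1))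
    \<longlonglongrightarrow> 0"
proof -
  let ?C = "cube e"
  have C: "finite ?C" "?C \<noteq> {}"
    using finite_cube[OF hypergraph_system_edge(3)[OF assms(1,3)]]
    unfolding cube_def by (auto simp: PiE_eq_empty_iff)
  have "avg (Vpts (V n) e \<times> Vpts (V n) e) (\<lambda>(x, y). \<Prod>\<theta>\<in>?C. \<nu> n e (mix e \<theta> x y) - 1) =
      (\<Sum>S\<in>Pow ?C. (-1) ^ card (?C - S) *
        avg (Vpts (V n) e \<times> Vpts (V n) e) (\<lambda>(x, y). \<Prod>\<theta>\<in>S. \<nu> n e (mix e \<theta> x y)))" for n
    by (simp add: prod_diff_one_eq_sum_Pow[OF C(1)] split_def avg_sum avg_mult_left)
  moreover have "(\<lambda>n. \<Sum>S\<in>Pow ?C. (-1) ^ card (?C - S) *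
      avg (Vpts (V n) e \<times> Vpts (V n) e) (\<lambda>(x, y). \<Prod>\<theta>\<in>S. \<nu> n e (mix e \<theta> x y)))
      \<longlonglongrightarrow> (\<Sum>S\<in>Pow ?C. (-1) ^ card (?C - S) * 1)"
    by (intro tendsto_intros pseudorandom_cube_moment_tendsto_1[OF assms]) auto
  moreover have "(\<Sum>S\<in>Pow ?C. (-1) ^ card (?C - S) * 1) = (0::real)"
  proof -
    have "card ?C \<noteq> 0" using C by simp
    then show ?thesis using prod_diff_one_eq_sum_Pow[OF C(1), of "\<lambda>_. 1"] by (simp add: power_0_left)
  qed
  ultimately show ?thesis by simp
qed

lemma pseudorandom_link_term_moment_bounded:
  assumes "hypergraph_system J V d H" "pseudorandom J V H \<nu>" "e \<in> H" "j \<in> e"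
  shows "\<exists>C. \<forall>\<^sub>F n in sequentially. \<bar>avg (Vpts (V n) (e - {j}) \<times> Vpts (V n) (e - {j}))
    (\<lambda>(z0, z1). dual_product_setting.link_term e (V n) (\<nu> n e) j S z0 z1 ^ p)\<bar> \<le> C"
proof -
  interpret dual_product_setting e "V n" "\<nu> n e" "{} :: nat set" for n
    using pseudorandom_dual_product_setting[OF assms(1-3) finite.emptyI] .
  have "\<forall>e\<in>H. \<forall>j\<in>e. \<forall>ex. \<forall>K :: nat.
      \<exists>C. \<forall>\<^sub>F n in sequentially. \<bar>avg (Vpts (V n) (e - {j}) \<times> Vpts (V n) (e - {j}))
        (\<lambda>(x0, x1). (avg (V n j \<times> V n j) (\<lambda>(y0, y1). \<Prod>\<omega>\<in>cube e.
          pw (ex \<omega>) (\<nu> n e (mix e \<omega> (x0(j := y0)) (x1(j := y1)))))) ^ K)\<bar> \<le> C"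
    using assms(2) unfolding pseudorandom_def by (elim conjE)
  from this[rule_format, OF assms(3,4), of "\<lambda>\<omega>. \<omega> \<in> S" p] show ?thesis
    unfolding link_term_def by simp
qed

lemma pseudorandom_link_moment_bounded:
  assumes "hypergraph_system J V d H" "pseudorandom J V H \<nu>" "e \<in> H"
  shows "\<exists>C\<ge>0. \<forall>\<^sub>F n in sequentially. \<forall>j\<in>e. dual_product_setting.link_moment e (V n) (\<nu> n e) j p \<le> C"
proof -
  interpret dual_product_setting e "V n" "\<nu> n e" "{} :: nat set" for n
    using pseudorandom_dual_product_setting[OF assms finite.emptyI] .
  let ?Ix = "Sigma e (\<lambda>j. Pow (upper_facet j))"
  define A where "A n j S = avg (Vpts (V n) (e - {j}) \<times> Vpts (V n) (e - {j}))
    (\<lambda>(x0, x1). link_term n j S x0 x1 ^ p)" for n j S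
  have finite: "finite ?Ix" unfolding upper_facet_def using finite_cube[OF finite_e] finite_e by auto
  have "\<forall>x\<in>?Ix. \<exists>C. \<forall>\<^sub>F n in sequentially. \<bar>A n (fst x) (snd x)\<bar> \<le> C"
    unfolding A_def using pseudorandom_link_term_moment_bounded[OF assms] by auto
  then obtain B where "\<forall>x\<in>?Ix. \<forall>\<^sub>F n in sequentially. \<bar>A n (fst x) (snd x)\<bar> \<le> B x"
    by (rule bchoice[elim_format]) blast
  then have ev: "\<forall>\<^sub>F n in sequentially. \<forall>x\<in>?Ix. \<bar>A n (fst x) (snd x)\<bar> \<le> B x"
    by (rule eventually_ball_finite[OF finite])
  define C where "C = (\<Sum>j\<in>e. real (card (Pow (upper_facet j))) ^ p * (\<Sum>S\<in>Pow (upper_facet j). \<bar>B (j, S)\<bar>))"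
  have bound: "link_moment n j p \<le> C" if A: "\<forall>x\<in>?Ix. \<bar>A n (fst x) (snd x)\<bar> \<le> B x" and "j \<in> e" for n j
  proof -
    have AB: "\<bar>A n j S\<bar> \<le> \<bar>B (j, S)\<bar>" if "S \<in> Pow (upper_facet j)" for S
      using that A[rule_format, of "(j, S)"] \<open>j \<in> e\<close> by simp
    have "link_moment n j p \<le> real (card (Pow (upper_facet j))) ^ p * (\<Sum>S\<in>Pow (upper_facet j). \<bar>A n j S\<bar>)"
      unfolding A_def by (rule link_moment_le[OF \<open>j \<in> e\<close>])
    also have "\<dots> \<le> real (card (Pow (upper_facet j))) ^ p * (\<Sum>S\<in>Pow (upper_facet j). \<bar>B (j, S)\<bar>)"
      using AB by (intro mult_left_mono sum_mono) auto
    also have "\<dots> \<le> C"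
      unfolding C_def using \<open>j \<in> e\<close> finite_e by (intro member_le_sum) auto
    finally show ?thesis .
  qed
  show ?thesis
  proof (intro exI conjI)
    show "0 \<le> C" unfolding C_def by (intro sum_nonneg mult_nonneg_nonneg) auto
    show "\<forall>\<^sub>F n in sequentially. \<forall>j\<in>e. link_moment n j p \<le> C"
      using ev by (rule eventually_mono) (simp add: bound)
  qed
qed

lemma pseudorandom_dual_correlation_eventually_le:
  assumes "hypergraph_system J V d H" "pseudorandom J V H \<nu>" "e \<in> H" "finite I" "\<delta> > 0"
  shows "\<forall>\<^sub>F n in sequentially. \<forall>f :: 'i \<Rightarrow> ('j \<Rightarrow> 'a) \<Rightarrow> real.
    (\<forall>i\<in>I. \<forall>x\<in>Vpts (V n) e. \<bar>f i x\<bar> \<le> \<nu> n e x + 1) \<longrightarrow>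
    \<bar>avg (Vpts (V n) e) (\<lambda>x. (\<nu> n e x - 1) * (\<Prod>i\<in>I. dual (V n) e (f i) x))\<bar> \<le> \<delta>"
proof -
  obtain C where C: "0 \<le> C"
    "\<forall>\<^sub>F n in sequentially. \<forall>j\<in>e. dual_product_setting.link_moment e (V n) (\<nu> n e) j (2 * card I) \<le> C"
    using pseudorandom_link_moment_bounded[OF assms(1-3)] by blast
  define \<Gamma> where "\<Gamma> = 1 + real (card I) * C"
  define P where "P = (2::nat) ^ card e"
  define \<eta> where "\<eta> = \<delta> ^ P / \<Gamma> ^ (P - 1)"
  have \<Gamma>: "1 \<le> \<Gamma>" unfolding \<Gamma>_def using C(1) by simp
  have "\<eta> > 0" unfolding \<eta>_def using assms(5) \<Gamma> by simp
  then have "\<forall>\<^sub>F n in sequentially.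
      \<bar>avg (Vpts (V n) e \<times> Vpts (V n) e) (\<lambda>(x, y). \<Prod>\<theta>\<in>cube e. \<nu> n e (mix e \<theta> x y) - 1)\<bar> < \<eta>"
    using tendstoD[OF pseudorandom_cube_avg_tendsto_0[OF assms(1-3)]] by (simp add: dist_real_def)
  with C(2) show ?thesis
  proof (eventually_elim, intro allI impI, goal_cases)
    case (1 n f)
    interpret dual_product_setting e "V n" "\<nu> n e" I
      using pseudorandom_dual_product_setting[OF assms(1-4)] .
    let ?t = "\<bar>avg (Vpts (V n) e) (\<lambda>x. (\<nu> n e x - 1) * (\<Prod>i\<in>I. dual (V n) e (f i) x))\<bar>"
    have "?t ^ P \<le> \<Gamma> ^ (P - 1) *
        \<bar>avg (Vpts (V n) e \<times> Vpts (V n) e) (\<lambda>(x, y). \<Prod>\<theta>\<in>cube e. \<nu> n e (mix e \<theta> x y) - 1)\<bar>"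
      unfolding P_def \<Gamma>_def using 1 C(1) by (intro dual_correlation_power_le) auto
    also have "\<dots> \<le> \<Gamma> ^ (P - 1) * \<eta>"
      using 1 \<Gamma> by (intro mult_left_mono) auto
    also have "\<dots> = \<delta> ^ P" unfolding \<eta>_def using \<Gamma> by simp
    finally have "?t ^ P \<le> \<delta> ^ P" .
    then show ?case using assms(5) by (simp add: P_def)
  qed
qed

section \<open>Polynomials in dual functions\<close>

lemma finite_monomials_le: "finite K \<Longrightarrow> finite (monomials_le K D)"
proof -
  assume K: "finite K"
  have "monomials_le K D \<subseteq> PiE K (\<lambda>_. {..D})"
  proof
    fix \<alpha> assume "\<alpha> \<in> monomials_le K D"
    then have "\<alpha> \<in> extensional K" "sum \<alpha> K \<le> D" unfolding monomials_le_def by auto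
    moreover have "\<alpha> k \<le> D" if "k \<in> K" for k
      using K that \<open>sum \<alpha> K \<le> D\<close> member_le_sum[of k K \<alpha>] by simp
    ultimately show "\<alpha> \<in> PiE K (\<lambda>_. {..D})" by (auto simp: PiE_iff)
  qed
  moreover have "finite (PiE K (\<lambda>_. {..D}))" using K by (simp add: finite_PiE)
  ultimately show ?thesis by (rule finite_subset)
qed

lemma abs_avg_mult_bounded_poly_le:
  assumes "bounded_poly K D M P"
    and "\<And>\<alpha>. \<alpha> \<in> monomials_le K D \<Longrightarrow> \<bar>avg X (\<lambda>x. w x * (\<Prod>k\<in>K. y x k ^ \<alpha> k))\<bar> \<le> \<delta>"
  shows "\<bar>avg X (\<lambda>x. w x * P (y x))\<bar> \<le> real (card (monomials_le K D)) * \<bar>M\<bar> * \<delta>"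
proof -
  let ?A = "monomials_le K D"
  obtain c where c: "\<And>\<alpha>. \<alpha> \<in> ?A \<Longrightarrow> \<bar>c \<alpha>\<bar> \<le> M" and P: "\<And>y. P y = (\<Sum>\<alpha>\<in>?A. c \<alpha> * (\<Prod>k\<in>K. y k ^ \<alpha> k))"
    using assms(1) unfolding bounded_poly_def by blast
  then have c: "\<And>\<alpha>. \<alpha> \<in> ?A \<Longrightarrow> \<bar>c \<alpha>\<bar> \<le> \<bar>M\<bar>" by force
  have "avg X (\<lambda>x. w x * P (y x)) = (\<Sum>\<alpha>\<in>?A. c \<alpha> * avg X (\<lambda>x. w x * (\<Prod>k\<in>K. y x k ^ \<alpha> k)))"
    unfolding P by (simp add: sum_distrib_left avg_sum avg_mult_left mult.left_commute)
  also have "\<bar>\<dots>\<bar> \<le> (\<Sum>\<alpha>\<in>?A. \<bar>M\<bar> * \<delta>)"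
    using c assms(2) by (intro order_trans[OF sum_abs] sum_mono) (auto simp: abs_mult intro!: mult_mono)
  finally show ?thesis by simp
qed

lemma prod_Sigma_lessThan_fst:
  "finite K \<Longrightarrow> (\<Prod>p\<in>Sigma K (\<lambda>k. {..<\<alpha> k}). g (fst p)) = (\<Prod>k\<in>K. g k ^ \<alpha> k)"
  using prod.Sigma[of K "\<lambda>k. {..<\<alpha> k}" "\<lambda>k r. g k"] by (simp add: split_def)

lemma pseudorandom_monomial_correlation_eventually_le:
  assumes "hypergraph_system J V d H" "pseudorandom J V H \<nu>" "e \<in> H" "finite K" "\<delta> > 0"
  shows "\<forall>\<^sub>F n in sequentially. \<forall>f :: 'k \<Rightarrow> ('j \<Rightarrow> 'a) \<Rightarrow> real.
    (\<forall>k\<in>K. \<forall>x\<in>Vpts (V n) e. \<bar>f k x\<bar> \<le> \<nu> n e x + 1) \<longrightarrow>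
    \<bar>avg (Vpts (V n) e) (\<lambda>x. (\<nu> n e x - 1) * (\<Prod>k\<in>K. dual (V n) e (f k) x ^ \<alpha> k))\<bar> \<le> \<delta>"
proof -
  let ?I = "Sigma K (\<lambda>k. {..<\<alpha> k})"
  have "finite ?I" using assms(4) by simp
  with assms show ?thesis
  proof (intro eventually_mono[OF pseudorandom_dual_correlation_eventually_le] allI impI)
    fix n and f :: "'k \<Rightarrow> ('j \<Rightarrow> 'a) \<Rightarrow> real"
    assume "\<forall>g :: 'k \<times> nat \<Rightarrow> ('j \<Rightarrow> 'a) \<Rightarrow> real. (\<forall>i\<in>?I. \<forall>x\<in>Vpts (V n) e. \<bar>g i x\<bar> \<le> \<nu> n e x + 1) \<longrightarrow>
        \<bar>avg (Vpts (V n) e) (\<lambda>x. (\<nu> n e x - 1) * (\<Prod>i\<in>?I. dual (V n) e (g i) x))\<bar> \<le> \<delta>"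
      and "\<forall>k\<in>K. \<forall>x\<in>Vpts (V n) e. \<bar>f k x\<bar> \<le> \<nu> n e x + 1"
    then have "\<bar>avg (Vpts (V n) e) (\<lambda>x. (\<nu> n e x - 1) * (\<Prod>i\<in>?I. dual (V n) e (f (fst i)) x))\<bar> \<le> \<delta>"
      by auto
    moreover have "(\<Prod>i\<in>?I. dual (V n) e (f (fst i)) x) = (\<Prod>k\<in>K. dual (V n) e (f k) x ^ \<alpha> k)" for x
      using assms(4) by (rule prod_Sigma_lessThan_fst)
    ultimately show "\<bar>avg (Vpts (V n) e)
        (\<lambda>x. (\<nu> n e x - 1) * (\<Prod>k\<in>K. dual (V n) e (f k) x ^ \<alpha> k))\<bar> \<le> \<delta>"
      by simp
  qed
qed

theorem mainTheorem13:
  fixes J :: "'j set" and V :: "nat \<Rightarrow> 'j \<Rightarrow> 'a set" and d :: nat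
    and H :: "'j set set" and \<nu> :: "nat \<Rightarrow> 'j set \<Rightarrow> ('j \<Rightarrow> 'a) \<Rightarrow> real"
    and e :: "'j set" and K :: "'k set" and D :: nat and M :: real
  assumes "hypergraph_system J V d H"
    and "pseudorandom J V H \<nu>"
    and "e \<in> H"
    and "finite K"
  shows "\<forall>\<epsilon>>0. \<forall>\<^sub>F n in sequentially.
           \<forall>(P :: ('k \<Rightarrow> real) \<Rightarrow> real) (f :: 'k \<Rightarrow> ('j \<Rightarrow> 'a) \<Rightarrow> real).
             bounded_poly K D M P \<longrightarrow>
             (\<forall>k\<in>K. \<forall>x\<in>Vpts (V n) e. \<bar>f k x\<bar> \<le> \<nu> n e x + 1) \<longrightarrow>
             \<bar>avg (Vpts (V n) e)
                (\<lambda>x. (\<nu> n e x - 1) * P (\<lambda>k. dual (V n) e (f k) x))\<bar> \<le> \<epsilon>"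
proof (intro allI impI, goal_cases)
  case (1 \<epsilon>)
  let ?A = "monomials_le K D"
  define m where "m = real (card ?A) * \<bar>M\<bar>"
  define \<delta> where "\<delta> = \<epsilon> / (m + 1)"
  have "0 \<le> m" unfolding m_def by simp
  then have "\<delta> > 0" and \<delta>: "m * \<delta> \<le> \<epsilon>"
    using \<open>\<epsilon> > 0\<close> unfolding \<delta>_def by (simp_all add: field_simps)
  have "\<forall>\<^sub>F n in sequentially. \<forall>\<alpha>\<in>?A. \<forall>f :: 'k \<Rightarrow> ('j \<Rightarrow> 'a) \<Rightarrow> real.
      (\<forall>k\<in>K. \<forall>x\<in>Vpts (V n) e. \<bar>f k x\<bar> \<le> \<nu> n e x + 1) \<longrightarrow>
      \<bar>avg (Vpts (V n) e) (\<lambda>x. (\<nu> n e x - 1) * (\<Prod>k\<in>K. dual (V n) e (f k) x ^ \<alpha> k))\<bar> \<le> \<delta>"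
    using finite_monomials_le[OF assms(4)] assms \<open>\<delta> > 0\<close>
    by (intro eventually_ball_finite ballI pseudorandom_monomial_correlation_eventually_le) auto
  then show ?case
  proof (eventually_elim, intro allI impI, goal_cases)
    case (1 n P f)
    then have "\<bar>avg (Vpts (V n) e) (\<lambda>x. (\<nu> n e x - 1) * P (\<lambda>k. dual (V n) e (f k) x))\<bar> \<le> m * \<delta>"
      unfolding m_def by (intro abs_avg_mult_bounded_poly_le) auto
    with \<delta> show ?case by linarith
  qed
qed

end
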